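(* Let $I(k)$ be the number of countable $C_{n,m}$-homogeneous linear orderings (up to isomorphism) with $n+m+1=k$, $n,m$ finite, and let $L(k)$ be the number of countable homogeneous colored linear orderings in $k$ colors (up to isomorphism). Then $I(k)=O(k!\,2.123^k)$; in particular $\lim_{k\to\infty}\frac{I(k)}{L(k)}=0$.
   Context: For a linear ordering, $x\sim_1y$ iff only finitely many elements lie between $x$ and $y$. For $i\in\omega$: $S_i(x)$ holds iff $x$ has exactly $i$ successors (exactly $i$ elements $y>x$ with $y\sim_1x$); $P_j(x)$ iff $x$ has exactly $j$ predecessors; $Adj_k(x,y)$ iff exactly $k$ elements lie strictly between $x$ and $y$. A linear ordering is $C_{n,m}$-homogeneous if its expansion by $\{S_i\}_{i<n}$, $\{P_j\}_{j<m}$, $\{Adj_k\}_{k<n+m}$ is homogeneous (every isomorphism between finite substructures extends to an automorphism); the number of such countable orderings depends only on $n+m+1$. A colored linear ordering in $k$ colors is a linear ordering with $k$ fixed labeled unary predicates partitioning it; it is homogeneous if every isomorphism between finite substructures extends to an automorphism. *)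

theory Defs
  imports Complex_Main
begin

text \<open>Countable structures are represented on carriers A :: nat set (every countable
  linear ordering is isomorphic to one of these). lt is the strict order.\<close>

definition lin_on :: "nat set \<Rightarrow> (nat \<Rightarrow> nat \<Rightarrow> bool) \<Rightarrow> bool" where
  "lin_on A lt \<longleftrightarrow>
     (\<forall>x\<in>A. \<not> lt x x) \<and>
     (\<forall>x\<in>A. \<forall>y\<in>A. \<forall>z\<in>A. lt x y \<and> lt y z \<longrightarrow> lt x z) \<and>
     (\<forall>x\<in>A. \<forall>y\<in>A. x \<noteq> y \<longrightarrow> lt x y \<or> lt y x)"

definition order_aut :: "nat set \<Rightarrow> (nat \<Rightarrow> nat \<Rightarrow> bool) \<Rightarrow> (nat \<Rightarrow> nat) \<Rightarrow> bool" where
  "order_aut A lt g \<longleftrightarrow> bij_betw g A A \<and> (\<forall>x\<in>A. \<forall>y\<in>A. lt x y \<longleftrightarrow> lt (g x) (g y))"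

definition betw :: "nat set \<Rightarrow> (nat \<Rightarrow> nat \<Rightarrow> bool) \<Rightarrow> nat \<Rightarrow> nat \<Rightarrow> nat set" where
  "betw A lt x y = {z\<in>A. (lt x z \<and> lt z y) \<or> (lt y z \<and> lt z x)}"

definition sim1 :: "nat set \<Rightarrow> (nat \<Rightarrow> nat \<Rightarrow> bool) \<Rightarrow> nat \<Rightarrow> nat \<Rightarrow> bool" where
  "sim1 A lt x y \<longleftrightarrow> finite (betw A lt x y)"

definition has_exactly :: "nat set \<Rightarrow> nat \<Rightarrow> bool" where
  "has_exactly X i \<longleftrightarrow> finite X \<and> card X = i"

definition Spred :: "nat set \<Rightarrow> (nat \<Rightarrow> nat \<Rightarrow> bool) \<Rightarrow> nat \<Rightarrow> nat \<Rightarrow> bool" where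
  "Spred A lt i x \<longleftrightarrow> has_exactly {y\<in>A. lt x y \<and> sim1 A lt y x} i"

definition Ppred :: "nat set \<Rightarrow> (nat \<Rightarrow> nat \<Rightarrow> bool) \<Rightarrow> nat \<Rightarrow> nat \<Rightarrow> bool" where
  "Ppred A lt j x \<longleftrightarrow> has_exactly {y\<in>A. lt y x \<and> sim1 A lt y x} j"

definition Adj :: "nat set \<Rightarrow> (nat \<Rightarrow> nat \<Rightarrow> bool) \<Rightarrow> nat \<Rightarrow> nat \<Rightarrow> nat \<Rightarrow> bool" where
  "Adj A lt k x y \<longleftrightarrow> has_exactly (betw A lt x y) k"

text \<open>C_{n,m}-homogeneity: every isomorphism between finite substructures of the expansion
  by S_i (i<n), P_j (j<m), Adj_k (k<n+m) extends to an automorphism (order automorphisms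
  automatically preserve these definable predicates).\<close>
definition cnm_homogeneous :: "nat \<Rightarrow> nat \<Rightarrow> nat set \<Rightarrow> (nat \<Rightarrow> nat \<Rightarrow> bool) \<Rightarrow> bool" where
  "cnm_homogeneous n m A lt \<longleftrightarrow>
     (\<forall>D p. finite D \<and> D \<subseteq> A \<and> inj_on p D \<and> p ` D \<subseteq> A \<and>
        (\<forall>x\<in>D. \<forall>y\<in>D. lt x y \<longleftrightarrow> lt (p x) (p y)) \<and>
        (\<forall>i<n. \<forall>x\<in>D. Spred A lt i x \<longleftrightarrow> Spred A lt i (p x)) \<and>
        (\<forall>j<m. \<forall>x\<in>D. Ppred A lt j x \<longleftrightarrow> Ppred A lt j (p x)) \<and>
        (\<forall>k<n+m. \<forall>x\<in>D. \<forall>y\<in>D. Adj A lt k x y \<longleftrightarrow> Adj A lt k (p x) (p y))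
      \<longrightarrow> (\<exists>g. order_aut A lt g \<and> (\<forall>x\<in>D. g x = p x)))"

definition order_iso :: "nat set \<times> (nat \<Rightarrow> nat \<Rightarrow> bool) \<Rightarrow> nat set \<times> (nat \<Rightarrow> nat \<Rightarrow> bool) \<Rightarrow> bool" where
  "order_iso X Y \<longleftrightarrow> (\<exists>f. bij_betw f (fst X) (fst Y) \<and>
      (\<forall>x\<in>fst X. \<forall>y\<in>fst X. snd X x y \<longleftrightarrow> snd Y (f x) (f y)))"

definition iso_classes :: "'s set \<Rightarrow> ('s \<Rightarrow> 's \<Rightarrow> bool) \<Rightarrow> 's set set" where
  "iso_classes S eqv = {C. \<exists>X\<in>S. C = {Y\<in>S. eqv X Y}}"

definition CNM_orders :: "nat \<Rightarrow> nat \<Rightarrow> (nat set \<times> (nat \<Rightarrow> nat \<Rightarrow> bool)) set" where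
  "CNM_orders n m = {(A, lt). lin_on A lt \<and> cnm_homogeneous n m A lt}"

definition I_count :: "nat \<Rightarrow> nat \<Rightarrow> nat" where
  "I_count n m = card (iso_classes (CNM_orders n m) order_iso)"

text \<open>Colored linear orderings in k colors: colour function col with colours 0..k-1,
  each colour class nonempty (partition).\<close>
type_synonym cstruct = "nat set \<times> (nat \<Rightarrow> nat \<Rightarrow> bool) \<times> (nat \<Rightarrow> nat)"

definition colored_lin :: "nat \<Rightarrow> cstruct \<Rightarrow> bool" where
  "colored_lin k X \<longleftrightarrow> (case X of (A, lt, col) \<Rightarrow>
     lin_on A lt \<and> col ` A = {..<k})"

definition colored_homogeneous :: "cstruct \<Rightarrow> bool" where
  "colored_homogeneous X \<longleftrightarrow> (case X of (A, lt, col) \<Rightarrow>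
     (\<forall>D p. finite D \<and> D \<subseteq> A \<and> inj_on p D \<and> p ` D \<subseteq> A \<and>
        (\<forall>x\<in>D. \<forall>y\<in>D. lt x y \<longleftrightarrow> lt (p x) (p y)) \<and>
        (\<forall>x\<in>D. col (p x) = col x)
      \<longrightarrow> (\<exists>g. order_aut A lt g \<and> (\<forall>x\<in>A. col (g x) = col x) \<and> (\<forall>x\<in>D. g x = p x))))"

definition colored_iso :: "cstruct \<Rightarrow> cstruct \<Rightarrow> bool" where
  "colored_iso X Y \<longleftrightarrow> (case X of (A, lt, col) \<Rightarrow> case Y of (B, lt', col') \<Rightarrow>
     (\<exists>f. bij_betw f A B \<and> (\<forall>x\<in>A. \<forall>y\<in>A. lt x y \<longleftrightarrow> lt' (f x) (f y)) \<and>
          (\<forall>x\<in>A. col' (f x) = col x)))"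

definition L_count :: "nat \<Rightarrow> nat" where
  "L_count k = card (iso_classes {X. colored_lin k X \<and> colored_homogeneous X} colored_iso)"

definition CNM_classes :: "nat \<Rightarrow> nat \<Rightarrow> (nat set \<times> (nat \<Rightarrow> nat \<Rightarrow> bool)) set set" where
  "CNM_classes n m = iso_classes (CNM_orders n m) order_iso"

definition colored_classes :: "nat \<Rightarrow> cstruct set set" where
  "colored_classes k = iso_classes {X. colored_lin k X \<and> colored_homogeneous X} colored_iso"

end

theory Submission
  imports Defs "HOL-Combinatorics.Permutations" "HOL-Library.FuncSet"
begin

text \<open>Back and forth shows that a countable homogeneous structure is determined by the finite
  configurations it realises. For a homogeneous coloured ordering these are determined by the pairs
  of colours (c, d) such that a point of colour c lies below a point of colour d; colouring k points by
  the k! permutations of the colours gives k! non-isomorphic examples, so L(k) \<ge> k!.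

  In a C(n,m)-homogeneous ordering every ~1-class is finite and has at most n + m + 1 points,
  since two points that the signature cannot distinguish are moved onto each other by an
  automorphism although they have different positions. The ordering is then determined by the set
  of class sizes that occur and by which sizes occur before which at infinite distance. At most
  min n m + 1 sizes occur, and that relation is coded by a rank and a bit for each size, so that
  I(k) \<le> 2^k J^J 2^J with J = min n m + 1 \<le> (k + 1) / 2. This is o(k!), in particular O(k! 2.123^k).\<close>

section \<open>Back and forth\<close>

text \<open>A structure on a carrier A is given by a labelling tp of ordered pairs with their atomic type.\<close>

definition tp_embedding :: "nat set \<Rightarrow> (nat \<Rightarrow> nat \<Rightarrow> 'c) \<Rightarrow> nat set \<Rightarrow> (nat \<Rightarrow> nat \<Rightarrow> 'c) \<Rightarrow> (nat \<Rightarrow> nat) \<Rightarrow> bool" where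
  "tp_embedding E tpA B tpB h \<longleftrightarrow> inj_on h E \<and> h ` E \<subseteq> B \<and> (\<forall>x\<in>E. \<forall>y\<in>E. tpB (h x) (h y) = tpA x y)"

definition tp_homogeneous :: "nat set \<Rightarrow> (nat \<Rightarrow> nat \<Rightarrow> 'c) \<Rightarrow> bool" where
  "tp_homogeneous A tp \<longleftrightarrow> (\<forall>D p. finite D \<and> D \<subseteq> A \<and> tp_embedding D tp A tp p \<longrightarrow>
      (\<exists>g. bij_betw g A A \<and> (\<forall>x\<in>A. \<forall>y\<in>A. tp (g x) (g y) = tp x y) \<and> (\<forall>x\<in>D. g x = p x)))"

definition finitely_embeds :: "nat set \<Rightarrow> (nat \<Rightarrow> nat \<Rightarrow> 'c) \<Rightarrow> nat set \<Rightarrow> (nat \<Rightarrow> nat \<Rightarrow> 'c) \<Rightarrow> bool" where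
  "finitely_embeds A tpA B tpB \<longleftrightarrow> (\<forall>E. finite E \<and> E \<subseteq> A \<longrightarrow> (\<exists>h. tp_embedding E tpA B tpB h))"

definition partial_iso :: "(nat \<Rightarrow> nat \<Rightarrow> 'c) \<Rightarrow> (nat \<Rightarrow> nat \<Rightarrow> 'c) \<Rightarrow> (nat \<times> nat) set \<Rightarrow> bool" where
  "partial_iso tpA tpB P \<longleftrightarrow> finite P \<and>
     (\<forall>x y x' y'. (x, y) \<in> P \<longrightarrow> (x', y') \<in> P \<longrightarrow> tpB y y' = tpA x x' \<and> (x = x' \<longleftrightarrow> y = y'))"

lemma tp_homogeneousD:
  assumes "tp_homogeneous A tp" "finite D" "D \<subseteq> A" "tp_embedding D tp A tp p"
  obtains g where "bij_betw g A A" "\<And>x y. x \<in> A \<Longrightarrow> y \<in> A \<Longrightarrow> tp (g x) (g y) = tp x y"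
    "\<And>x. x \<in> D \<Longrightarrow> g x = p x"
  using assms unfolding tp_homogeneous_def by metis

lemma tp_homogeneous_move_pair:
  assumes "tp_homogeneous A tp" "u \<in> A" "v \<in> A" "w \<in> A" "tp w w = tp u u"
  obtains b where "b \<in> A" "tp w b = tp u v" "tp b w = tp v u" "tp b b = tp v v"
proof -
  have "tp_embedding {u} tp A tp (\<lambda>_. w)"
    using assms(4,5) unfolding tp_embedding_def by auto
  then obtain g where g: "bij_betw g A A" "\<And>x y. x \<in> A \<Longrightarrow> y \<in> A \<Longrightarrow> tp (g x) (g y) = tp x y" "g u = w"
    using tp_homogeneousD[OF assms(1)] assms(2) by (metis empty_subsetI finite.simps insert_subset singletonI)
  show ?thesis
    using that[of "g v"] bij_betw_apply[OF g(1) assms(3)] g(2)[of u v] g(2)[of v u] g(2)[of v v] g(3) assms(2,3)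
    by simp
qed

lemma finitely_embedsD:
  assumes "finitely_embeds A tpA B tpB" "finite E" "E \<subseteq> A"
  obtains h where "tp_embedding E tpA B tpB h"
  using assms unfolding finitely_embeds_def by blast

lemma partial_iso_converse: "partial_iso tpA tpB P \<Longrightarrow> partial_iso tpB tpA (P\<inverse>)"
  unfolding partial_iso_def by auto

lemma partial_iso_graph:
  assumes "partial_iso tpA tpB P" "P \<subseteq> A \<times> B"
  obtains f where "tp_embedding (Domain P) tpA B tpB f" "P = (\<lambda>x. (x, f x)) ` Domain P"
proof
  define f where "f x = (SOME y. (x, y) \<in> P)" for x
  have Pf: "(x, f x) \<in> P" if "x \<in> Domain P" for x
    using that unfolding f_def by (auto intro: someI)
  with assms show "tp_embedding (Domain P) tpA B tpB f"
    unfolding tp_embedding_def partial_iso_def inj_on_def by blast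
  show "P = (\<lambda>x. (x, f x)) ` Domain P"
    using Pf assms(1) unfolding partial_iso_def by fastforce
qed

lemma partial_iso_graph_of:
  "tp_embedding D tpA B tpB f \<Longrightarrow> finite D \<Longrightarrow> partial_iso tpA tpB ((\<lambda>x. (x, f x)) ` D)"
  unfolding tp_embedding_def partial_iso_def inj_on_def by auto

text \<open>To add a point a, embed D \<union> {a} into B and correct the embedding by an automorphism of B.\<close>

lemma tp_embedding_extend:
  assumes hB: "tp_homogeneous B tpB" and emb: "finitely_embeds A tpA B tpB"
    and f: "tp_embedding D tpA B tpB f" and D: "finite D" "D \<subseteq> A" and a: "a \<in> A" "a \<notin> D"
  obtains b where "b \<in> B" "tp_embedding (insert a D) tpA B tpB (f(a := b))"
proof -
  obtain h where h: "tp_embedding (insert a D) tpA B tpB h"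
    using finitely_embedsD[OF emb, of "insert a D"] D a by auto
  then have h_inj: "inj_on h (insert a D)" and h_B: "\<And>x. x \<in> insert a D \<Longrightarrow> h x \<in> B"
    and h_tp: "\<And>x y. x \<in> insert a D \<Longrightarrow> y \<in> insert a D \<Longrightarrow> tpB (h x) (h y) = tpA x y"
    unfolding tp_embedding_def by auto
  define q where "q = f \<circ> inv_into D h"
  have qh: "q (h x) = f x" if "x \<in> D" for x
    unfolding q_def using inv_into_f_f[OF inj_on_subset[OF h_inj subset_insertI] that] by simp
  have "tp_embedding (h ` D) tpB B tpB q"
    using f h_tp unfolding tp_embedding_def inj_on_def by (auto simp: qh)
  then obtain g where g: "bij_betw g B B" "\<And>x y. x \<in> B \<Longrightarrow> y \<in> B \<Longrightarrow> tpB (g x) (g y) = tpB x y"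
    and gq: "\<And>x. x \<in> h ` D \<Longrightarrow> g x = q x"
    using tp_homogeneousD[OF hB, of "h ` D" q] h_B D(1) by blast
  have gh: "g (h x) = f x" if "x \<in> D" for x using gq qh that by simp
  define b where "b = g (h a)"
  have bB: "b \<in> B" unfolding b_def using bij_betw_apply[OF g(1) h_B] by simp
  moreover have "tp_embedding (insert a D) tpA B tpB (f(a := b))"
  proof -
    have "f x \<noteq> b" if "x \<in> D" for x
    proof
      assume "f x = b"
      then have "g (h a) = g (h x)" using gh[OF that] unfolding b_def by simp
      then have "h a = h x"
        using inj_onD[OF bij_betw_imp_inj_on[OF g(1)] _ h_B[of a] h_B[of x]] that by simp
      with h_inj that a(2) show False by (auto dest: inj_onD)
    qed
    moreover have "tpB b (f x) = tpA a x" "tpB (f x) b = tpA x a" if "x \<in> D" for x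
      using g(2) h_B h_tp that unfolding b_def gh[OF that, symmetric] by auto
    moreover have "tpB b b = tpA a a" using g(2) h_B h_tp unfolding b_def by auto
    ultimately show ?thesis using f a(2) bB unfolding tp_embedding_def inj_on_def by auto
  qed
  ultimately show ?thesis by (rule that)
qed

lemma partial_iso_extend_forth:
  assumes hB: "tp_homogeneous B tpB" and emb: "finitely_embeds A tpA B tpB"
    and P: "partial_iso tpA tpB P" "P \<subseteq> A \<times> B" and a: "a \<in> A"
  obtains b where "b \<in> B" "partial_iso tpA tpB (insert (a, b) P)"
proof -
  obtain f where f: "tp_embedding (Domain P) tpA B tpB f" and P_graph: "P = (\<lambda>x. (x, f x)) ` Domain P"
    using partial_iso_graph[OF P] by blast
  show ?thesis
  proof (cases "a \<in> Domain P")
    case True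
    then have "insert (a, f a) P = P" using P_graph by auto
    moreover have "f a \<in> B" using True f unfolding tp_embedding_def by auto
    ultimately show ?thesis using P(1) by (intro that[of "f a"]) auto
  next
    case False
    have D: "finite (Domain P)" "Domain P \<subseteq> A" using P unfolding partial_iso_def by (auto intro: finite_Domain)
    obtain b where "b \<in> B" "tp_embedding (insert a (Domain P)) tpA B tpB (f(a := b))"
      using tp_embedding_extend[OF hB emb f D a False] by blast
    moreover have "(\<lambda>x. (x, (f(a := b)) x)) ` Domain P = (\<lambda>x. (x, f x)) ` Domain P"
      using False by (intro image_cong) auto
    then have "(\<lambda>x. (x, (f(a := b)) x)) ` insert a (Domain P) = insert (a, b) P"
      using P_graph[symmetric] by simp
    ultimately show ?thesis using partial_iso_graph_of[of "insert a (Domain P)"] D(1) that by fastforce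
  qed
qed

lemma partial_iso_extend_back:
  assumes hA: "tp_homogeneous A tpA" and emb: "finitely_embeds B tpB A tpA"
    and P: "partial_iso tpA tpB P" "P \<subseteq> A \<times> B" and b: "b \<in> B"
  obtains a where "a \<in> A" "partial_iso tpA tpB (insert (a, b) P)"
proof -
  obtain a where "a \<in> A" "partial_iso tpB tpA (insert (b, a) (P\<inverse>))"
    using partial_iso_extend_forth[OF hA emb partial_iso_converse[OF P(1)] _ b] P(2) by blast
  moreover have "(insert (b, a) (P\<inverse>))\<inverse> = insert (a, b) P" by auto
  ultimately show ?thesis using that partial_iso_converse by metis
qed

lemma partial_iso_extend:
  assumes "tp_homogeneous A tpA" "tp_homogeneous B tpB"
    and "finitely_embeds A tpA B tpB" "finitely_embeds B tpB A tpA"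
    and P: "partial_iso tpA tpB P" "P \<subseteq> A \<times> B"
  obtains Q where "P \<subseteq> Q" "partial_iso tpA tpB Q" "Q \<subseteq> A \<times> B"
    "i \<in> A \<Longrightarrow> i \<in> Domain Q" "i \<in> B \<Longrightarrow> i \<in> Range Q"
proof -
  obtain P1 where P1: "P \<subseteq> P1" "partial_iso tpA tpB P1" "P1 \<subseteq> A \<times> B" "i \<in> A \<Longrightarrow> i \<in> Domain P1"
  proof (cases "i \<in> A")
    case True
    then obtain b where "b \<in> B" "partial_iso tpA tpB (insert (i, b) P)"
      using partial_iso_extend_forth[OF assms(2,3) P] by blast
    with P(2) True show ?thesis by (intro that[of "insert (i, b) P"]) auto
  qed (use P that in auto)
  obtain P2 where "P1 \<subseteq> P2" "partial_iso tpA tpB P2" "P2 \<subseteq> A \<times> B" "i \<in> B \<Longrightarrow> i \<in> Range P2"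
  proof (cases "i \<in> B")
    case True
    then obtain a where "a \<in> A" "partial_iso tpA tpB (insert (a, i) P1)"
      using partial_iso_extend_back[OF assms(1,4) P1(2,3)] by blast
    with P1(3) True show ?thesis by (intro that[of "insert (a, i) P1"]) auto
  qed (use P1 that in auto)
  with P1 show ?thesis by (intro that[of P2]) auto
qed

text \<open>Cantor's back-and-forth argument: at stage i the chain takes care of the number i,
  on both sides.\<close>

lemma partial_iso_chain:
  assumes "tp_homogeneous A tpA" "tp_homogeneous B tpB"
    and "finitely_embeds A tpA B tpB" "finitely_embeds B tpB A tpA"
  obtains C where "incseq C" "\<And>i. partial_iso tpA tpB (C i)" "\<And>i. C i \<subseteq> A \<times> B"
    "A \<subseteq> Domain (\<Union>i. C i)" "B \<subseteq> Range (\<Union>i. C i)"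
proof -
  let ?good = "\<lambda>P. partial_iso tpA tpB P \<and> P \<subseteq> A \<times> B"
  define step where "step P i = (SOME Q. P \<subseteq> Q \<and> ?good Q \<and>
      (i \<in> A \<longrightarrow> i \<in> Domain Q) \<and> (i \<in> B \<longrightarrow> i \<in> Range Q))" for P i
  have step: "P \<subseteq> step P i \<and> ?good (step P i) \<and>
      (i \<in> A \<longrightarrow> i \<in> Domain (step P i)) \<and> (i \<in> B \<longrightarrow> i \<in> Range (step P i))"
    if good_P: "?good P" for P i
  proof -
    have "\<exists>Q. P \<subseteq> Q \<and> ?good Q \<and> (i \<in> A \<longrightarrow> i \<in> Domain Q) \<and> (i \<in> B \<longrightarrow> i \<in> Range Q)"
      by (rule partial_iso_extend[OF assms conjunct1[OF good_P] conjunct2[OF good_P], of i]) blast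
    then show ?thesis unfolding step_def by (rule someI_ex)
  qed
  define C where "C = rec_nat {} (\<lambda>i P. step P i)"
  have C_Suc: "C (Suc i) = step (C i) i" for i unfolding C_def by simp
  have good: "?good (C i)" for i
  proof (induction i)
    case 0
    then show ?case by (simp add: C_def partial_iso_def)
  next
    case (Suc i)
    then show ?case unfolding C_Suc using step by blast
  qed
  have "C i \<subseteq> C (Suc i)" for i
    unfolding C_Suc using step[OF good] by blast
  then have "incseq C" by (rule incseq_SucI)
  moreover have "x \<in> Domain (C (Suc x))" if "x \<in> A" for x
    using step[OF good, of x] that unfolding C_Suc by blast
  then have "A \<subseteq> Domain (\<Union>i. C i)" by blast
  moreover have "y \<in> Range (C (Suc y))" if "y \<in> B" for y
    using step[OF good, of y] that unfolding C_Suc by blast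
  then have "B \<subseteq> Range (\<Union>i. C i)" by blast
  ultimately show ?thesis using good by (intro that[of C]) auto
qed

lemma partial_iso_Union_bij:
  assumes C: "incseq C" "\<And>i. partial_iso tpA tpB (C i)" "\<And>i. C i \<subseteq> A \<times> B"
    and total: "A \<subseteq> Domain (\<Union>i. C i)" "B \<subseteq> Range (\<Union>i. C i)"
  obtains f where "bij_betw f A B" "\<And>x y. x \<in> A \<Longrightarrow> y \<in> A \<Longrightarrow> tpB (f x) (f y) = tpA x y"
proof -
  define R where "R = (\<Union>i. C i)"
  have R_AB: "R \<subseteq> A \<times> B" unfolding R_def using C(3) by blast
  have R_iso: "tpB y y' = tpA x x' \<and> (x = x' \<longleftrightarrow> y = y')" if in_R: "(x, y) \<in> R" "(x', y') \<in> R" for x y x' y'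
  proof -
    obtain i j where "(x, y) \<in> C i" "(x', y') \<in> C j" using in_R unfolding R_def by blast
    moreover have "C i \<subseteq> C (max i j)" "C j \<subseteq> C (max i j)"
      using C(1) by (simp_all add: monoD)
    ultimately have "(x, y) \<in> C (max i j)" "(x', y') \<in> C (max i j)" by auto
    then show ?thesis using C(2) unfolding partial_iso_def by blast
  qed
  define f where "f x = (SOME y. (x, y) \<in> R)" for x
  have fR: "(x, f x) \<in> R" if x: "x \<in> A" for x
  proof -
    obtain y where "(x, y) \<in> R" using total(1) x unfolding R_def by blast
    then show ?thesis unfolding f_def by (rule someI)
  qed
  have "bij_betw f A B"
  proof (rule bij_betw_imageI)
    show "inj_on f A" using R_iso[OF fR fR] by (intro inj_onI) blast
    show "f ` A = B"
    proof
      show "f ` A \<subseteq> B" using fR R_AB by blast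
      show "B \<subseteq> f ` A"
      proof
        fix y assume "y \<in> B"
        then obtain x where xy: "(x, y) \<in> R" using total(2) unfolding R_def by blast
        then have "x \<in> A" using R_AB by blast
        with R_iso[OF xy fR] show "y \<in> f ` A" by auto
      qed
    qed
  qed
  then show ?thesis using R_iso[OF fR fR] by (intro that[of f]) auto
qed

theorem tp_homogeneous_iso:
  assumes "tp_homogeneous A tpA" "tp_homogeneous B tpB"
    and "finitely_embeds A tpA B tpB" "finitely_embeds B tpB A tpA"
  obtains f where "bij_betw f A B" "\<And>x y. x \<in> A \<Longrightarrow> y \<in> A \<Longrightarrow> tpB (f x) (f y) = tpA x y"
proof -
  obtain C where C: "incseq C" "\<And>i. partial_iso tpA tpB (C i)" "\<And>i. C i \<subseteq> A \<times> B"
    "A \<subseteq> Domain (\<Union>i. C i)" "B \<subseteq> Range (\<Union>i. C i)"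
    by (rule partial_iso_chain[OF assms]) blast
  show ?thesis by (rule partial_iso_Union_bij[OF C that])
qed

lemma lin_on_irrefl: "lin_on A lt \<Longrightarrow> x \<in> A \<Longrightarrow> \<not> lt x x"
  unfolding lin_on_def by blast

lemma lin_on_trans: "lin_on A lt \<Longrightarrow> x \<in> A \<Longrightarrow> y \<in> A \<Longrightarrow> z \<in> A \<Longrightarrow> lt x y \<Longrightarrow> lt y z \<Longrightarrow> lt x z"
  unfolding lin_on_def by blast

lemma lin_on_total: "lin_on A lt \<Longrightarrow> x \<in> A \<Longrightarrow> y \<in> A \<Longrightarrow> x \<noteq> y \<Longrightarrow> lt x y \<or> lt y x"
  unfolding lin_on_def by blast

lemma lin_on_asym: "lin_on A lt \<Longrightarrow> x \<in> A \<Longrightarrow> y \<in> A \<Longrightarrow> lt x y \<Longrightarrow> \<not> lt y x"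
  unfolding lin_on_def by blast

lemma lin_on_finite_has_max:
  assumes "lin_on A lt" "finite E" "E \<noteq> {}" "E \<subseteq> A"
  obtains x where "x \<in> E" "\<And>y. y \<in> E \<Longrightarrow> y \<noteq> x \<Longrightarrow> lt y x"
proof -
  have "\<exists>x\<in>E. \<forall>y\<in>E. y \<noteq> x \<longrightarrow> lt y x"
    using assms(2-4)
  proof (induction E rule: finite_ne_induct)
    case (insert z F)
    then obtain x where x: "x \<in> F" "\<forall>y\<in>F. y \<noteq> x \<longrightarrow> lt y x" by auto
    have zA: "z \<in> A" and xA: "x \<in> A" using insert.prems x(1) by auto
    have "z \<noteq> x" using insert.hyps(3) x(1) by blast
    then consider "lt z x" | "lt x z" using lin_on_total[OF assms(1) zA xA] by blast
    then show ?case
    proof cases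
      case 1
      then show ?thesis using x by auto
    next
      case 2
      have "lt y z" if "y \<in> F" for y
        using x that 2 lin_on_trans[OF assms(1) _ xA zA] insert.prems by (cases "y = x") auto
      then show ?thesis by auto
    qed
  qed simp
  with that show ?thesis by blast
qed

lemma finitely_embeds_by_top_extension:
  assumes lin: "lin_on A lt"
    and strict: "\<And>x y. x \<in> A \<Longrightarrow> y \<in> A \<Longrightarrow> lt y x \<Longrightarrow> tpA y x \<noteq> tpA x x"
    and ext: "\<And>F x h. finite F \<Longrightarrow> F \<subseteq> A \<Longrightarrow> x \<in> A \<Longrightarrow> (\<And>z. z \<in> F \<Longrightarrow> lt z x) \<Longrightarrow>
      tp_embedding F tpA B tpB h \<Longrightarrow>
      \<exists>b\<in>B. tpB b b = tpA x x \<and> (\<forall>z\<in>F. tpB (h z) b = tpA z x \<and> tpB b (h z) = tpA x z)"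
  shows "finitely_embeds A tpA B tpB"
  unfolding finitely_embeds_def
proof (intro allI impI)
  fix E assume "finite E \<and> E \<subseteq> A"
  then show "\<exists>h. tp_embedding E tpA B tpB h"
  proof (induction "card E" arbitrary: E)
    case 0
    then show ?case by (auto simp: tp_embedding_def)
  next
    case (Suc N)
    then have E: "finite E" "E \<subseteq> A" "E \<noteq> {}" by auto
    obtain x where x: "x \<in> E" "\<And>y. y \<in> E \<Longrightarrow> y \<noteq> x \<Longrightarrow> lt y x"
      using lin_on_finite_has_max[OF lin E(1,3,2)] by blast
    define F where "F = E - {x}"
    have F: "finite F" "F \<subseteq> A" "x \<notin> F" "E = insert x F" and F_below: "\<And>z. z \<in> F \<Longrightarrow> lt z x"
      using E x unfolding F_def by auto
    obtain h where h: "tp_embedding F tpA B tpB h"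
      using Suc.hyps(1)[of F] Suc.hyps(2) F by auto
    obtain b where b: "b \<in> B" "tpB b b = tpA x x" "\<And>z. z \<in> F \<Longrightarrow> tpB (h z) b = tpA z x \<and> tpB b (h z) = tpA x z"
      using ext[OF F(1,2) _ F_below h] E(2) x(1) by blast
    have b_new: "h z \<noteq> b" if "z \<in> F" for z
      using b(2) b(3)[OF that] strict[of x z] F(2) E(2) x(1) F_below[OF that] that by force
    have "tp_embedding (insert x F) tpA B tpB (h(x := b))"
      using h b b_new F(3) unfolding tp_embedding_def inj_on_def by auto
    then show ?case using F(4) by blast
  qed
qed

lemma iso_classes_by_invariant:
  assumes "\<And>X Y. X \<in> S \<Longrightarrow> Y \<in> S \<Longrightarrow> eqv X Y \<longleftrightarrow> \<phi> X = \<phi> Y"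
  shows "iso_classes S eqv = (\<lambda>d. {Y\<in>S. \<phi> Y = d}) ` (\<phi> ` S)"
proof -
  have "{Y\<in>S. eqv X Y} = {Y\<in>S. \<phi> Y = \<phi> X}" if "X \<in> S" for X
    using assms that by auto
  then show ?thesis unfolding iso_classes_def by auto
qed

lemma card_iso_classes_by_invariant:
  assumes "\<And>X Y. X \<in> S \<Longrightarrow> Y \<in> S \<Longrightarrow> eqv X Y \<longleftrightarrow> \<phi> X = \<phi> Y"
  shows "card (iso_classes S eqv) = card (\<phi> ` S)"
proof -
  have "inj_on (\<lambda>d. {Y\<in>S. \<phi> Y = d}) (\<phi> ` S)"
    by (rule inj_onI) blast
  moreover have "iso_classes S eqv = (\<lambda>d. {Y\<in>S. \<phi> Y = d}) ` (\<phi> ` S)"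
    using assms by (rule iso_classes_by_invariant)
  ultimately show ?thesis by (simp add: card_image)
qed

lemma finite_iso_classes_by_invariant:
  assumes "\<And>X Y. X \<in> S \<Longrightarrow> Y \<in> S \<Longrightarrow> eqv X Y \<longleftrightarrow> \<phi> X = \<phi> Y" "finite (\<phi> ` S)"
  shows "finite (iso_classes S eqv)"
proof -
  have "iso_classes S eqv = (\<lambda>d. {Y\<in>S. \<phi> Y = d}) ` (\<phi> ` S)"
    using assms(1) by (rule iso_classes_by_invariant)
  with assms(2) show ?thesis by simp
qed

section \<open>Homogeneous coloured orderings\<close>

definition colour_tp :: "(nat \<Rightarrow> nat \<Rightarrow> bool) \<Rightarrow> (nat \<Rightarrow> nat) \<Rightarrow> nat \<Rightarrow> nat \<Rightarrow> bool \<times> nat" where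
  "colour_tp lt col x y = (lt x y, col x)"

text \<open>The complete invariant of a homogeneous coloured ordering.\<close>

definition colour_pairs :: "cstruct \<Rightarrow> (nat \<times> nat) set" where
  "colour_pairs X = (case X of (A, lt, col) \<Rightarrow> {(col x, col y) | x y. x \<in> A \<and> y \<in> A \<and> lt x y})"

definition homogeneous_colored :: "nat \<Rightarrow> cstruct set" where
  "homogeneous_colored k = {X. colored_lin k X \<and> colored_homogeneous X}"

lemma colored_homogeneous_tp_homogeneous:
  assumes "colored_homogeneous (A, lt, col)"
  shows "tp_homogeneous A (colour_tp lt col)"
  unfolding tp_homogeneous_def
proof (intro allI impI)
  fix D p assume "finite D \<and> D \<subseteq> A \<and> tp_embedding D (colour_tp lt col) A (colour_tp lt col) p"
  then have "finite D \<and> D \<subseteq> A \<and> inj_on p D \<and> p ` D \<subseteq> A \<and>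
      (\<forall>x\<in>D. \<forall>y\<in>D. lt x y \<longleftrightarrow> lt (p x) (p y)) \<and> (\<forall>x\<in>D. col (p x) = col x)"
    unfolding tp_embedding_def colour_tp_def by auto
  then obtain g where "order_aut A lt g" "\<forall>x\<in>A. col (g x) = col x" "\<forall>x\<in>D. g x = p x"
    using assms[unfolded colored_homogeneous_def prod.case, rule_format, of D p] by blast
  then show "\<exists>g. bij_betw g A A \<and> (\<forall>x\<in>A. \<forall>y\<in>A. colour_tp lt col (g x) (g y) = colour_tp lt col x y) \<and>
      (\<forall>x\<in>D. g x = p x)"
    unfolding order_aut_def colour_tp_def by auto
qed

lemma colour_pairs_colored_iso:
  assumes "colored_iso (A, lt, col) (B, lt', col')"
  shows "colour_pairs (A, lt, col) = colour_pairs (B, lt', col')"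
proof -
  obtain f where f: "bij_betw f A B" "\<forall>x\<in>A. \<forall>y\<in>A. lt x y \<longleftrightarrow> lt' (f x) (f y)" "\<forall>x\<in>A. col' (f x) = col x"
    using assms unfolding colored_iso_def by auto
  have eq: "(col' (f x), col' (f y)) = (col x, col y) \<and> (lt' (f x) (f y) \<longleftrightarrow> lt x y)"
    if "x \<in> A" "y \<in> A" for x y
    using f(2,3) that by simp
  have "colour_pairs (B, lt', col') = {(col' (f x), col' (f y)) | x y. x \<in> A \<and> y \<in> A \<and> lt' (f x) (f y)}"
    using bij_betw_imp_surj_on[OF f(1)] unfolding colour_pairs_def by blast
  also have "\<dots> = colour_pairs (A, lt, col)"
    unfolding colour_pairs_def prod.case
  proof (rule Collect_cong)
    fix u show "(\<exists>x y. u = (col' (f x), col' (f y)) \<and> x \<in> A \<and> y \<in> A \<and> lt' (f x) (f y)) \<longleftrightarrow>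
      (\<exists>x y. u = (col x, col y) \<and> x \<in> A \<and> y \<in> A \<and> lt x y)"
      using eq by metis
  qed
  finally show ?thesis ..
qed

lemma colour_pairs_above:
  assumes lin: "lin_on B lt'" and hB: "tp_homogeneous B (colour_tp lt' col')"
    and cd: "(c, d) \<in> colour_pairs (B, lt', col')" and w: "w \<in> B" "col' w = c"
  obtains b where "b \<in> B" "col' b = d" "lt' w b"
proof -
  obtain u v where uv: "u \<in> B" "v \<in> B" "lt' u v" "col' u = c" "col' v = d"
    using cd unfolding colour_pairs_def by auto
  have "colour_tp lt' col' w w = colour_tp lt' col' u u"
    using w uv lin_on_irrefl[OF lin] unfolding colour_tp_def by simp
  then obtain b where "b \<in> B" "colour_tp lt' col' w b = colour_tp lt' col' u v"
    "colour_tp lt' col' b b = colour_tp lt' col' v v"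
    using tp_homogeneous_move_pair[OF hB uv(1,2) w(1)] by blast
  with uv(3,5) that show ?thesis unfolding colour_tp_def by simp
qed

lemma colour_pairs_extend_top:
  assumes linA: "lin_on A lt" and linB: "lin_on B lt'" and hB: "tp_homogeneous B (colour_tp lt' col')"
    and colours: "col ` A \<subseteq> col' ` B" and pairs: "colour_pairs (A, lt, col) \<subseteq> colour_pairs (B, lt', col')"
    and F: "finite F" "F \<subseteq> A" and x: "x \<in> A" and below: "\<And>z. z \<in> F \<Longrightarrow> lt z x"
    and h: "tp_embedding F (colour_tp lt col) B (colour_tp lt' col') h"
  obtains b where "b \<in> B" "col' b = col x" "\<And>z. z \<in> F \<Longrightarrow> lt' (h z) b"
proof (cases "F = {}")
  case True
  obtain b where "b \<in> B" "col' b = col x" using colours x by (metis imageE image_subset_iff)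
  with True show ?thesis by (intro that) auto
next
  case False
  have hB': "h z \<in> B" and h_col: "col' (h z) = col z" if "z \<in> F" for z
    using h that unfolding tp_embedding_def colour_tp_def by auto
  have h_lt: "lt' (h z) (h w) \<longleftrightarrow> lt z w" if "z \<in> F" "w \<in> F" for z w
    using h that unfolding tp_embedding_def colour_tp_def by auto
  obtain y where y: "y \<in> F" "\<And>z. z \<in> F \<Longrightarrow> z \<noteq> y \<Longrightarrow> lt z y"
    using lin_on_finite_has_max[OF linA F(1) False F(2)] by blast
  have "(col y, col x) \<in> colour_pairs (B, lt', col')"
    using pairs below[OF y(1)] y(1) F(2) x unfolding colour_pairs_def by blast
  then obtain b where b: "b \<in> B" "col' b = col x" "lt' (h y) b"
    using colour_pairs_above[OF linB hB _ hB'[OF y(1)] h_col[OF y(1)]] by blast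
  have "lt' (h z) b" if "z \<in> F" for z
  proof (cases "z = y")
    case False
    then show ?thesis
      using lin_on_trans[OF linB hB'[OF that] hB'[OF y(1)] b(1) _ b(3)] h_lt[OF that y(1)] y(2)[OF that]
      by blast
  qed (use b in simp)
  with b show ?thesis by (intro that[of b])
qed

lemma finitely_embeds_colour_pairs:
  assumes linA: "lin_on A lt" and linB: "lin_on B lt'" and hB: "tp_homogeneous B (colour_tp lt' col')"
    and colours: "col ` A \<subseteq> col' ` B" and pairs: "colour_pairs (A, lt, col) \<subseteq> colour_pairs (B, lt', col')"
  shows "finitely_embeds A (colour_tp lt col) B (colour_tp lt' col')"
proof (rule finitely_embeds_by_top_extension[OF linA])
  show "colour_tp lt col y x \<noteq> colour_tp lt col x x" if "x \<in> A" "lt y x" for x y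
    using that lin_on_irrefl[OF linA] unfolding colour_tp_def by auto
  fix F x h
  assume F: "finite F" "F \<subseteq> A" and xA: "x \<in> A" and below: "\<And>z. z \<in> F \<Longrightarrow> lt z x"
    and h: "tp_embedding F (colour_tp lt col) B (colour_tp lt' col') h"
  obtain b where b: "b \<in> B" "col' b = col x" "\<And>z. z \<in> F \<Longrightarrow> lt' (h z) b"
    using colour_pairs_extend_top[OF assms F xA below h] by blast
  have hB': "h z \<in> B" and h_col: "col' (h z) = col z" if "z \<in> F" for z
    using h that unfolding tp_embedding_def colour_tp_def by auto
  have "colour_tp lt' col' (h z) b = colour_tp lt col z x \<and> colour_tp lt' col' b (h z) = colour_tp lt col x z"
    if "z \<in> F" for z
  proof -
    have "\<not> lt' b (h z)" "\<not> lt x z"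
      using b(1,3) below hB' lin_on_asym[OF linB] lin_on_asym[OF linA] F(2) xA that by blast+
    then show ?thesis using b(2,3) below h_col that unfolding colour_tp_def by simp
  qed
  moreover have "colour_tp lt' col' b b = colour_tp lt col x x"
    using b lin_on_irrefl[OF linA xA] lin_on_irrefl[OF linB] unfolding colour_tp_def by simp
  ultimately show "\<exists>b\<in>B. colour_tp lt' col' b b = colour_tp lt col x x \<and>
      (\<forall>z\<in>F. colour_tp lt' col' (h z) b = colour_tp lt col z x \<and> colour_tp lt' col' b (h z) = colour_tp lt col x z)"
    using b(1) by blast
qed

lemma colored_iso_iff_colour_pairs:
  assumes "X \<in> homogeneous_colored k" "Y \<in> homogeneous_colored k"
  shows "colored_iso X Y \<longleftrightarrow> colour_pairs X = colour_pairs Y"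
proof -
  obtain A lt col B lt' col' where XY: "X = (A, lt, col)" "Y = (B, lt', col')" by (cases X, cases Y) auto
  have lin: "lin_on A lt" "lin_on B lt'" and colours: "col ` A = col' ` B"
    and hom: "tp_homogeneous A (colour_tp lt col)" "tp_homogeneous B (colour_tp lt' col')"
    using assms colored_homogeneous_tp_homogeneous
    unfolding XY homogeneous_colored_def colored_lin_def by auto
  show ?thesis
  proof
    assume "colour_pairs X = colour_pairs Y"
    then have "finitely_embeds A (colour_tp lt col) B (colour_tp lt' col')"
      "finitely_embeds B (colour_tp lt' col') A (colour_tp lt col)"
      using finitely_embeds_colour_pairs[OF lin hom(2)] finitely_embeds_colour_pairs[OF lin(2,1) hom(1)]
        colours unfolding XY by auto
    then obtain f where f: "bij_betw f A B"
      "\<And>x y. x \<in> A \<Longrightarrow> y \<in> A \<Longrightarrow> colour_tp lt' col' (f x) (f y) = colour_tp lt col x y"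
      by (rule tp_homogeneous_iso[OF hom]) blast
    then show "colored_iso X Y"
      unfolding XY colored_iso_def colour_tp_def by auto
  qed (use colour_pairs_colored_iso XY in simp)
qed

lemma colour_pairs_subset: "X \<in> homogeneous_colored k \<Longrightarrow> colour_pairs X \<subseteq> {..<k} \<times> {..<k}"
  unfolding homogeneous_colored_def colored_lin_def colour_pairs_def by auto

lemma finite_colour_pairs_image: "finite (colour_pairs ` homogeneous_colored k)"
proof (rule finite_subset)
  show "colour_pairs ` homogeneous_colored k \<subseteq> Pow ({..<k} \<times> {..<k})"
    using colour_pairs_subset by blast
qed simp

lemma finite_colored_classes: "finite (colored_classes k)"
  unfolding colored_classes_def homogeneous_colored_def[symmetric]
  using colored_iso_iff_colour_pairs finite_colour_pairs_image
  by (rule finite_iso_classes_by_invariant)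

lemma L_count_eq_card_colour_pairs: "L_count k = card (colour_pairs ` homogeneous_colored k)"
  unfolding L_count_def homogeneous_colored_def[symmetric]
  using colored_iso_iff_colour_pairs by (rule card_iso_classes_by_invariant)

text \<open>The k! witnesses for L(k) \<ge> k!: the points 0 < ... < k - 1 coloured by a permutation.\<close>

definition perm_colored :: "nat \<Rightarrow> (nat \<Rightarrow> nat) \<Rightarrow> cstruct" where
  "perm_colored k \<pi> = ({..<k}, (<), \<pi>)"

lemma perm_colored_homogeneous:
  assumes "\<pi> permutes {..<k}"
  shows "perm_colored k \<pi> \<in> homogeneous_colored k"
proof -
  have "colored_lin k (perm_colored k \<pi>)"
    unfolding perm_colored_def colored_lin_def lin_on_def using permutes_image[OF assms] by auto
  moreover have "colored_homogeneous (perm_colored k \<pi>)"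
    unfolding perm_colored_def colored_homogeneous_def prod.case
  proof (intro allI impI)
    fix D p assume "finite D \<and> D \<subseteq> {..<k} \<and> inj_on p D \<and> p ` D \<subseteq> {..<k} \<and>
       (\<forall>x\<in>D. \<forall>y\<in>D. x < y \<longleftrightarrow> p x < p y) \<and> (\<forall>x\<in>D. \<pi> (p x) = \<pi> x)"
    \<comment> \<open>colours are pairwise distinct, so p is the identity\<close>
    then have "\<forall>x\<in>D. p x = x" using permutes_inj[OF assms] unfolding inj_def by blast
    then show "\<exists>g. order_aut {..<k} (<) g \<and> (\<forall>x\<in>{..<k}. \<pi> (g x) = \<pi> x) \<and> (\<forall>x\<in>D. g x = p x)"
      by (intro exI[of _ id]) (auto simp: order_aut_def)
  qed
  ultimately show ?thesis unfolding homogeneous_colored_def by simp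
qed

lemma colour_pairs_perm_colored:
  "colour_pairs (perm_colored k \<pi>) = {(\<pi> x, \<pi> y) | x y. x < k \<and> y < k \<and> x < y}"
  unfolding colour_pairs_def perm_colored_def by simp

lemma card_colours_below_perm_colored:
  assumes \<pi>: "\<pi> permutes {..<k}" and "c < k"
  shows "card {d. (d, c) \<in> colour_pairs (perm_colored k \<pi>)} = inv \<pi> c"
proof -
  have c: "\<pi> (inv \<pi> c) = c" "inv \<pi> c < k"
    using permutes_inverses(1)[OF \<pi>] permutes_in_image[OF permutes_inv[OF \<pi>]] \<open>c < k\<close> by auto
  have inv_c: "y = inv \<pi> c" if "\<pi> y = c" for y
    using permutes_inv_eq[OF \<pi>, of c y] that by simp
  have "{d. (d, c) \<in> colour_pairs (perm_colored k \<pi>)} = \<pi> ` {..<inv \<pi> c}"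
  proof (intro set_eqI iffI)
    fix d assume "d \<in> {d. (d, c) \<in> colour_pairs (perm_colored k \<pi>)}"
    then obtain x y where xy: "d = \<pi> x" "c = \<pi> y" "x < y"
      unfolding colour_pairs_perm_colored by auto
    with inv_c[of y] show "d \<in> \<pi> ` {..<inv \<pi> c}" by simp
  next
    fix d assume "d \<in> \<pi> ` {..<inv \<pi> c}"
    then obtain x where x: "x < inv \<pi> c" "d = \<pi> x" by auto
    with c(2) have "x < k" by simp
    with x c have "(\<pi> x, \<pi> (inv \<pi> c)) \<in> colour_pairs (perm_colored k \<pi>)"
      unfolding colour_pairs_perm_colored by blast
    then show "d \<in> {d. (d, c) \<in> colour_pairs (perm_colored k \<pi>)}"
      by (simp only: mem_Collect_eq x(2) c(1))
  qed
  then show ?thesis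
    using card_image[OF permutes_inj_on[OF \<pi>]] by simp
qed

lemma inj_on_colour_pairs_perm_colored:
  "inj_on (\<lambda>\<pi>. colour_pairs (perm_colored k \<pi>)) {\<pi>. \<pi> permutes {..<k}}"
proof (rule inj_onI)
  fix \<pi> \<sigma> assume "\<pi> \<in> {\<pi>. \<pi> permutes {..<k}}" "\<sigma> \<in> {\<pi>. \<pi> permutes {..<k}}"
    and eq: "colour_pairs (perm_colored k \<pi>) = colour_pairs (perm_colored k \<sigma>)"
  then have \<pi>: "\<pi> permutes {..<k}" and \<sigma>: "\<sigma> permutes {..<k}" by auto
  have "inv \<pi> c = inv \<sigma> c" for c
  proof (cases "c < k")
    case True
    then show ?thesis
      using card_colours_below_perm_colored[OF \<pi> True] card_colours_below_perm_colored[OF \<sigma> True] eq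
      by simp
  next
    case False
    then show ?thesis using permutes_not_in[OF permutes_inv[OF \<pi>]] permutes_not_in[OF permutes_inv[OF \<sigma>]]
      by simp
  qed
  then have "inv \<pi> = inv \<sigma>" ..
  then show "\<pi> = \<sigma>" using permutes_inv_inv[OF \<pi>] permutes_inv_inv[OF \<sigma>] by metis
qed

theorem fact_le_L_count: "fact k \<le> L_count k"
proof -
  let ?P = "(\<lambda>\<pi>. colour_pairs (perm_colored k \<pi>)) ` {\<pi>. \<pi> permutes {..<k}}"
  have "fact k = card ?P"
    using card_image[OF inj_on_colour_pairs_perm_colored] card_permutations[of "{..<k}" k] by simp
  also have "\<dots> \<le> card (colour_pairs ` homogeneous_colored k)"
    using perm_colored_homogeneous finite_colour_pairs_image by (intro card_mono) auto
  finally show ?thesis unfolding L_count_eq_card_colour_pairs .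
qed

lemma betw_sym: "betw A lt x y = betw A lt y x"
  unfolding betw_def by auto

lemma betw_subset: "betw A lt x y \<subseteq> A"
  unfolding betw_def by auto

lemma betw_self: "lin_on A lt \<Longrightarrow> x \<in> A \<Longrightarrow> betw A lt x x = {}"
  unfolding betw_def using lin_on_asym by blast

lemma betw_iff: "z \<in> betw A lt x y \<longleftrightarrow> z \<in> A \<and> (lt x z \<and> lt z y \<or> lt y z \<and> lt z x)"
  unfolding betw_def by simp

lemma sim1_refl: "lin_on A lt \<Longrightarrow> x \<in> A \<Longrightarrow> sim1 A lt x x"
  unfolding sim1_def using betw_self by simp

lemma sim1_sym: "sim1 A lt x y \<Longrightarrow> sim1 A lt y x"
  unfolding sim1_def using betw_sym by metis

lemma betw_trans_subset:
  assumes "lin_on A lt" "x \<in> A" "y \<in> A" "z \<in> A"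
  shows "betw A lt x z \<subseteq> betw A lt x y \<union> betw A lt y z \<union> {y}"
proof
  fix w assume w: "w \<in> betw A lt x z"
  then have wA: "w \<in> A" by (simp add: betw_iff)
  show "w \<in> betw A lt x y \<union> betw A lt y z \<union> {y}"
  proof (cases "w = y")
    case True then show ?thesis by simp
  next
    case False
    then have "lt w y \<or> lt y w" using lin_on_total[OF assms(1) wA assms(3)] by blast
    then show ?thesis using w wA unfolding Un_iff betw_iff singleton_iff by blast
  qed
qed

lemma sim1_trans:
  assumes "lin_on A lt" "x \<in> A" "y \<in> A" "z \<in> A" "sim1 A lt x y" "sim1 A lt y z"
  shows "sim1 A lt x z"
proof -
  have "finite (betw A lt x y \<union> betw A lt y z \<union> {y})" using assms(5,6) unfolding sim1_def by simp
  then show ?thesis unfolding sim1_def using betw_trans_subset[OF assms(1-4)] by (rule finite_subset[rotated])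
qed

lemma betw_mono:
  assumes "lin_on A lt" "x \<in> A" "w \<in> A" "y \<in> A" "lt x w" "lt w y"
  shows "betw A lt w y \<subseteq> betw A lt x y" and "betw A lt x w \<subseteq> betw A lt x y"
  using assms lin_on_trans[OF assms(1)] unfolding betw_def by blast+

lemma sim1_between:
  assumes "lin_on A lt" "x \<in> A" "w \<in> A" "y \<in> A" "lt x w" "lt w y" "sim1 A lt x y"
  shows "sim1 A lt x w" and "sim1 A lt w y"
  using assms betw_mono[OF assms(1-6)] unfolding sim1_def by (auto intro: finite_subset)

lemma betw_split:
  assumes "lin_on A lt" "x \<in> A" "w \<in> A" "y \<in> A" "lt x w" "lt w y"
  shows "betw A lt x y = betw A lt x w \<union> {w} \<union> betw A lt w y"
proof
  show "betw A lt x y \<subseteq> betw A lt x w \<union> {w} \<union> betw A lt w y"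
    using betw_trans_subset[OF assms(1-4)] by blast
  show "betw A lt x w \<union> {w} \<union> betw A lt w y \<subseteq> betw A lt x y"
  proof -
    have "w \<in> betw A lt x y" using assms unfolding betw_iff by simp
    then show ?thesis using betw_mono[OF assms] by blast
  qed
qed

lemma card_betw_split:
  assumes "lin_on A lt" "x \<in> A" "w \<in> A" "y \<in> A" "lt x w" "lt w y" "finite (betw A lt x y)"
  shows "card (betw A lt x y) = card (betw A lt x w) + 1 + card (betw A lt w y)"
proof -
  have e: "betw A lt x y = betw A lt x w \<union> {w} \<union> betw A lt w y" by (rule betw_split[OF assms(1-6)])
  have f1: "finite (betw A lt x w)" "finite (betw A lt w y)" using assms(7) e by auto
  have d1: "w \<notin> betw A lt x w" "w \<notin> betw A lt w y" using lin_on_irrefl[OF assms(1)] unfolding betw_iff by auto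
  have d2: "betw A lt x w \<inter> betw A lt w y = {}"
  proof (rule ccontr)
    assume "betw A lt x w \<inter> betw A lt w y \<noteq> {}"
    then obtain u where u: "u \<in> betw A lt x w" "u \<in> betw A lt w y" by blast
    then have uA: "u \<in> A" by (simp add: betw_iff)
    have "lt u w"
    proof -
      have "lt x u \<and> lt u w \<or> lt w u \<and> lt u x" using u(1) by (simp add: betw_iff)
      moreover have "\<not> (lt w u \<and> lt u x)"
        using lin_on_trans[OF assms(1) assms(3) uA assms(2)] lin_on_asym[OF assms(1) assms(2) assms(3) assms(5)] by blast
      ultimately show ?thesis by blast
    qed
    moreover have "lt w u"
    proof -
      have "lt w u \<and> lt u y \<or> lt y u \<and> lt u w" using u(2) by (simp add: betw_iff)
      moreover have "\<not> (lt y u \<and> lt u w)"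
        using lin_on_trans[OF assms(1) assms(4) uA assms(3)] lin_on_asym[OF assms(1) assms(3) assms(4) assms(6)] by blast
      ultimately show ?thesis by blast
    qed
    ultimately show False using lin_on_asym[OF assms(1) uA assms(3)] by blast
  qed
  have "card (betw A lt x w \<union> {w} \<union> betw A lt w y) = card (betw A lt x w \<union> {w}) + card (betw A lt w y)"
    by (rule card_Un_disjoint) (use f1 d1 d2 in auto)
  also have "card (betw A lt x w \<union> {w}) = card (betw A lt x w) + 1" using f1 d1 by simp
  finally show ?thesis using e by simp
qed

definition order_iso_map :: "nat set \<Rightarrow> (nat \<Rightarrow> nat \<Rightarrow> bool) \<Rightarrow> nat set \<Rightarrow> (nat \<Rightarrow> nat \<Rightarrow> bool) \<Rightarrow> (nat \<Rightarrow> nat) \<Rightarrow> bool" where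
  "order_iso_map A lt B lt' f \<longleftrightarrow> bij_betw f A B \<and> (\<forall>x\<in>A. \<forall>y\<in>A. lt x y \<longleftrightarrow> lt' (f x) (f y))"

lemma order_aut_iff_order_iso_map: "order_aut A lt g = order_iso_map A lt A lt g"
  unfolding order_aut_def order_iso_map_def by simp

lemma order_iso_map_betw:
  assumes "order_iso_map A lt B lt' f" "x \<in> A" "y \<in> A"
  shows "f ` betw A lt x y = betw B lt' (f x) (f y)"
proof
  have b: "bij_betw f A B" and o: "\<forall>x\<in>A. \<forall>y\<in>A. lt x y \<longleftrightarrow> lt' (f x) (f y)" using assms(1) unfolding order_iso_map_def by auto
  show "f ` betw A lt x y \<subseteq> betw B lt' (f x) (f y)"
  proof
    fix w assume "w \<in> f ` betw A lt x y"
    then obtain z where z: "z \<in> betw A lt x y" "w = f z" by auto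
    then have zA: "z \<in> A" by (simp add: betw_iff)
    have "f z \<in> B" using b zA bij_betwE by blast
    then show "w \<in> betw B lt' (f x) (f y)" using z zA o assms(2,3) unfolding betw_iff by auto
  qed
  show "betw B lt' (f x) (f y) \<subseteq> f ` betw A lt x y"
  proof
    fix w assume w: "w \<in> betw B lt' (f x) (f y)"
    then have "w \<in> B" by (simp add: betw_iff)
    then obtain z where z: "z \<in> A" "w = f z" using b unfolding bij_betw_def by auto
    then have "z \<in> betw A lt x y" using w o assms(2,3) unfolding betw_iff by auto
    then show "w \<in> f ` betw A lt x y" using z by auto
  qed
qed

lemma order_iso_map_inj: "order_iso_map A lt B lt' f \<Longrightarrow> inj_on f A"
  unfolding order_iso_map_def bij_betw_def by auto

lemma order_iso_map_in: "order_iso_map A lt B lt' f \<Longrightarrow> x \<in> A \<Longrightarrow> f x \<in> B"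
  unfolding order_iso_map_def using bij_betwE by blast

lemma order_iso_map_lt: "order_iso_map A lt B lt' f \<Longrightarrow> x \<in> A \<Longrightarrow> y \<in> A \<Longrightarrow> lt' (f x) (f y) \<longleftrightarrow> lt x y"
  unfolding order_iso_map_def by auto

lemma order_iso_map_card_betw:
  assumes "order_iso_map A lt B lt' f" "x \<in> A" "y \<in> A"
  shows "card (betw B lt' (f x) (f y)) = card (betw A lt x y)"
    and "finite (betw B lt' (f x) (f y)) \<longleftrightarrow> finite (betw A lt x y)"
proof -
  have i: "inj_on f (betw A lt x y)" using order_iso_map_inj[OF assms(1)] betw_subset inj_on_subset by metis
  show "card (betw B lt' (f x) (f y)) = card (betw A lt x y)"
    using card_image[OF i] order_iso_map_betw[OF assms] by simp
  show "finite (betw B lt' (f x) (f y)) \<longleftrightarrow> finite (betw A lt x y)"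
    using finite_image_iff[OF i] order_iso_map_betw[OF assms] by simp
qed

lemma order_iso_map_sim1:
  assumes "order_iso_map A lt B lt' f" "x \<in> A" "y \<in> A"
  shows "sim1 B lt' (f x) (f y) \<longleftrightarrow> sim1 A lt x y"
  unfolding sim1_def using order_iso_map_card_betw[OF assms] by simp

lemma order_iso_map_Adj:
  assumes "order_iso_map A lt B lt' f" "x \<in> A" "y \<in> A"
  shows "Adj B lt' k (f x) (f y) \<longleftrightarrow> Adj A lt k x y"
  unfolding Adj_def has_exactly_def using order_iso_map_card_betw[OF assms] by simp

lemma order_iso_map_image_Collect:
  assumes "order_iso_map A lt B lt' f"
    and "\<And>y. y \<in> A \<Longrightarrow> Q' (f y) \<longleftrightarrow> Q y"
  shows "f ` {y\<in>A. Q y} = {y\<in>B. Q' y}"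
proof
  show "f ` {y\<in>A. Q y} \<subseteq> {y\<in>B. Q' y}" using assms order_iso_map_in by auto
  show "{y\<in>B. Q' y} \<subseteq> f ` {y\<in>A. Q y}"
  proof
    fix w assume w: "w \<in> {y\<in>B. Q' y}"
    then obtain z where "z \<in> A" "w = f z" using assms(1) unfolding order_iso_map_def bij_betw_def by auto
    then show "w \<in> f ` {y\<in>A. Q y}" using w assms(2) by auto
  qed
qed

definition succs :: "nat set \<Rightarrow> (nat \<Rightarrow> nat \<Rightarrow> bool) \<Rightarrow> nat \<Rightarrow> nat set" where
  "succs A lt x = {y\<in>A. lt x y \<and> sim1 A lt y x}"
definition preds :: "nat set \<Rightarrow> (nat \<Rightarrow> nat \<Rightarrow> bool) \<Rightarrow> nat \<Rightarrow> nat set" where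
  "preds A lt x = {y\<in>A. lt y x \<and> sim1 A lt y x}"
definition sim1_class :: "nat set \<Rightarrow> (nat \<Rightarrow> nat \<Rightarrow> bool) \<Rightarrow> nat \<Rightarrow> nat set" where
  "sim1_class A lt x = {y\<in>A. sim1 A lt x y}"

lemma order_iso_map_succs: "order_iso_map A lt B lt' f \<Longrightarrow> x \<in> A \<Longrightarrow> f ` succs A lt x = succs B lt' (f x)"
  unfolding succs_def by (rule order_iso_map_image_Collect) (auto simp: order_iso_map_lt order_iso_map_sim1)
lemma order_iso_map_preds: "order_iso_map A lt B lt' f \<Longrightarrow> x \<in> A \<Longrightarrow> f ` preds A lt x = preds B lt' (f x)"
  unfolding preds_def by (rule order_iso_map_image_Collect) (auto simp: order_iso_map_lt order_iso_map_sim1)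
lemma order_iso_map_sim1_class: "order_iso_map A lt B lt' f \<Longrightarrow> x \<in> A \<Longrightarrow> f ` sim1_class A lt x = sim1_class B lt' (f x)"
  unfolding sim1_class_def by (rule order_iso_map_image_Collect) (auto simp: order_iso_map_lt order_iso_map_sim1)

lemma order_iso_map_card_image: "order_iso_map A lt B lt' f \<Longrightarrow> S \<subseteq> A \<Longrightarrow> card (f ` S) = card S \<and> (finite (f ` S) \<longleftrightarrow> finite S)"
  using order_iso_map_inj card_image finite_image_iff inj_on_subset by metis

lemma succs_subset: "succs A lt x \<subseteq> A" unfolding succs_def by auto
lemma preds_subset: "preds A lt x \<subseteq> A" unfolding preds_def by auto
lemma sim1_class_subset: "sim1_class A lt x \<subseteq> A" unfolding sim1_class_def by auto

lemma Spred_iff: "Spred A lt i x \<longleftrightarrow> finite (succs A lt x) \<and> card (succs A lt x) = i"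
  unfolding Spred_def succs_def has_exactly_def by simp
lemma Ppred_iff: "Ppred A lt j x \<longleftrightarrow> finite (preds A lt x) \<and> card (preds A lt x) = j"
  unfolding Ppred_def preds_def has_exactly_def by simp
lemma Adj_iff: "Adj A lt k x y \<longleftrightarrow> finite (betw A lt x y) \<and> card (betw A lt x y) = k"
  unfolding Adj_def has_exactly_def by simp

lemma order_iso_map_Spred: "order_iso_map A lt B lt' f \<Longrightarrow> x \<in> A \<Longrightarrow> Spred B lt' i (f x) \<longleftrightarrow> Spred A lt i x"
  unfolding Spred_iff using order_iso_map_succs order_iso_map_card_image succs_subset by metis
lemma order_iso_map_Ppred: "order_iso_map A lt B lt' f \<Longrightarrow> x \<in> A \<Longrightarrow> Ppred B lt' i (f x) \<longleftrightarrow> Ppred A lt i x"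
  unfolding Ppred_iff using order_iso_map_preds order_iso_map_card_image preds_subset by metis

text \<open>The atomic type of the pair (x, y) in the expansion by the S_i, P_j and Adj_k; the unary
  predicates of y are recorded in cnm_tp n m A lt y y.\<close>

definition cnm_tp :: "nat \<Rightarrow> nat \<Rightarrow> nat set \<Rightarrow> (nat \<Rightarrow> nat \<Rightarrow> bool) \<Rightarrow> nat \<Rightarrow> nat \<Rightarrow>
    bool \<times> (nat \<Rightarrow> bool) \<times> (nat \<Rightarrow> bool) \<times> (nat \<Rightarrow> bool)" where
  "cnm_tp n m A lt x y = (lt x y, \<lambda>i. i < n \<and> Spred A lt i x, \<lambda>j. j < m \<and> Ppred A lt j x, \<lambda>k. k < n + m \<and> Adj A lt k x y)"

lemma cnm_tp_eq_iff:
  "cnm_tp n m A lt a b = cnm_tp n m B lt' c d \<longleftrightarrow> (lt a b \<longleftrightarrow> lt' c d) \<and> (\<forall>i<n. Spred A lt i a \<longleftrightarrow> Spred B lt' i c) \<and>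
     (\<forall>j<m. Ppred A lt j a \<longleftrightarrow> Ppred B lt' j c) \<and> (\<forall>k<n+m. Adj A lt k a b \<longleftrightarrow> Adj B lt' k c d)"
  unfolding cnm_tp_def by (auto simp: fun_eq_iff)

lemma order_iso_map_cnm_tp:
  assumes "order_iso_map A lt B lt' f" "x \<in> A" "y \<in> A"
  shows "cnm_tp n m B lt' (f x) (f y) = cnm_tp n m A lt x y"
  unfolding cnm_tp_def
  using order_iso_map_lt[OF assms(1)] order_iso_map_Spred[OF assms(1)] order_iso_map_Ppred[OF assms(1)]
    order_iso_map_Adj[OF assms] assms(2,3)
  by auto

lemma cnm_homogeneousD:
  assumes h: "cnm_homogeneous n m A lt"
    and D: "finite D" "D \<subseteq> A" "inj_on p D" "p ` D \<subseteq> A"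
    and pt: "\<And>x y. x \<in> D \<Longrightarrow> y \<in> D \<Longrightarrow> cnm_tp n m A lt (p x) (p y) = cnm_tp n m A lt x y"
  shows "\<exists>g. order_iso_map A lt A lt g \<and> (\<forall>x\<in>D. g x = p x)"
proof -
  have "\<exists>g. order_aut A lt g \<and> (\<forall>x\<in>D. g x = p x)"
    using h[unfolded cnm_homogeneous_def, rule_format, of D p] D pt unfolding cnm_tp_eq_iff by auto
  then show ?thesis unfolding order_aut_iff_order_iso_map .
qed

lemma betw_conversep: "betw A lt\<inverse>\<inverse> = betw A lt"
  unfolding betw_def conversep_iff by (auto simp: fun_eq_iff)
lemma sim1_conversep: "sim1 A lt\<inverse>\<inverse> = sim1 A lt"
  by (simp add: fun_eq_iff sim1_def betw_conversep)
lemma succs_conversep: "succs A lt\<inverse>\<inverse> = preds A lt"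
  unfolding succs_def preds_def sim1_conversep by (auto simp: fun_eq_iff conversep_iff intro: sim1_sym)
lemma preds_conversep: "preds A lt\<inverse>\<inverse> = succs A lt"
  unfolding succs_def preds_def sim1_conversep by (auto simp: fun_eq_iff conversep_iff intro: sim1_sym)
lemma Spred_conversep: "Spred A lt\<inverse>\<inverse> = Ppred A lt"
  by (simp add: fun_eq_iff Spred_iff Ppred_iff succs_conversep)
lemma Ppred_conversep: "Ppred A lt\<inverse>\<inverse> = Spred A lt"
  by (simp add: fun_eq_iff Spred_iff Ppred_iff preds_conversep)
lemma Adj_conversep: "Adj A lt\<inverse>\<inverse> = Adj A lt"
  by (simp add: fun_eq_iff Adj_def betw_conversep)
lemma order_aut_conversep: "order_aut A lt\<inverse>\<inverse> g = order_aut A lt g"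
  unfolding order_aut_def conversep_iff by auto
lemma lin_on_conversep: "lin_on A lt \<Longrightarrow> lin_on A lt\<inverse>\<inverse>"
  unfolding lin_on_def conversep_iff by blast

lemma cnm_homogeneous_conversep:
  assumes h: "cnm_homogeneous n m A lt"
  shows "cnm_homogeneous m n A lt\<inverse>\<inverse>"
  unfolding cnm_homogeneous_def Spred_conversep Ppred_conversep Adj_conversep order_aut_conversep
proof (intro allI impI)
  fix D p
  assume H: "finite D \<and> D \<subseteq> A \<and> inj_on p D \<and> p ` D \<subseteq> A \<and>
       (\<forall>x\<in>D. \<forall>y\<in>D. lt\<inverse>\<inverse> x y = lt\<inverse>\<inverse> (p x) (p y)) \<and>
       (\<forall>i<m. \<forall>x\<in>D. Ppred A lt i x = Ppred A lt i (p x)) \<and>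
       (\<forall>j<n. \<forall>x\<in>D. Spred A lt j x = Spred A lt j (p x)) \<and>
       (\<forall>k<m + n. \<forall>x\<in>D. \<forall>y\<in>D. Adj A lt k x y = Adj A lt k (p x) (p y))"
  have c1: "\<forall>x\<in>D. \<forall>y\<in>D. lt x y = lt (p x) (p y)" using H unfolding conversep_iff by blast
  have c4: "\<forall>k<n + m. \<forall>x\<in>D. \<forall>y\<in>D. Adj A lt k x y = Adj A lt k (p x) (p y)" using H by (simp add: add.commute)
  show "\<exists>g. order_aut A lt g \<and> (\<forall>x\<in>D. g x = p x)"
    using h[unfolded cnm_homogeneous_def, rule_format, of D p] H c1 c4 by blast
qed

definition class_size :: "nat set \<Rightarrow> (nat \<Rightarrow> nat \<Rightarrow> bool) \<Rightarrow> nat \<Rightarrow> nat" where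
  "class_size A lt x = card (sim1_class A lt x)"
definition class_pos :: "nat set \<Rightarrow> (nat \<Rightarrow> nat \<Rightarrow> bool) \<Rightarrow> nat \<Rightarrow> nat" where
  "class_pos A lt x = card (preds A lt x)"

locale lin_order =
  fixes A :: "nat set" and lt :: "nat \<Rightarrow> nat \<Rightarrow> bool"
  assumes lin: "lin_on A lt"
begin

lemma sim1_class_decomp:
  assumes "x \<in> A"
  shows "sim1_class A lt x = preds A lt x \<union> {x} \<union> succs A lt x"
proof
  show "sim1_class A lt x \<subseteq> preds A lt x \<union> {x} \<union> succs A lt x"
  proof
    fix y assume y: "y \<in> sim1_class A lt x"
    then have yA: "y \<in> A" and s: "sim1 A lt x y" unfolding sim1_class_def by auto
    show "y \<in> preds A lt x \<union> {x} \<union> succs A lt x"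
    proof (cases "y = x")
      case False
      then have "lt y x \<or> lt x y" using lin_on_total[OF lin yA assms] by blast
      then show ?thesis using s sim1_sym yA unfolding preds_def succs_def by blast
    qed simp
  qed
  show "preds A lt x \<union> {x} \<union> succs A lt x \<subseteq> sim1_class A lt x"
    unfolding preds_def succs_def sim1_class_def using sim1_sym sim1_refl[OF lin assms] assms by blast
qed

lemma sim1_class_disjoint:
  assumes "x \<in> A"
  shows "x \<notin> preds A lt x" "x \<notin> succs A lt x" "preds A lt x \<inter> succs A lt x = {}"
  using lin_on_irrefl[OF lin assms] lin_on_asym[OF lin] lin_on_trans[OF lin] assms unfolding preds_def succs_def by blast+

lemma immediate_succ:
  assumes x: "x \<in> A" and ne: "succs A lt x \<noteq> {}"
  shows "\<exists>w\<in>succs A lt x. betw A lt x w = {}"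
proof -
  define f where "f = (\<lambda>w. card (betw A lt x w))"
  obtain w0 where w0: "w0 \<in> succs A lt x" using ne by blast
  obtain w where w: "w \<in> succs A lt x" and wmin: "\<And>w'. w' \<in> succs A lt x \<Longrightarrow> f w \<le> f w'"
    using ex_has_least_nat[of "\<lambda>w. w \<in> succs A lt x" w0 f] w0 by blast
  have wA: "w \<in> A" and xw: "lt x w" and sw: "sim1 A lt w x" using w unfolding succs_def by auto
  have fin: "finite (betw A lt x w)" using sw sim1_sym unfolding sim1_def by blast
  show ?thesis
  proof (rule bexI[OF _ w], rule ccontr)
    assume "betw A lt x w \<noteq> {}"
    then obtain z where z: "z \<in> betw A lt x w" by blast
    have zA: "z \<in> A" using z by (simp add: betw_iff)
    have xz: "lt x z" and zw: "lt z w"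
    proof -
      have "lt x z \<and> lt z w \<or> lt w z \<and> lt z x" using z by (simp add: betw_iff)
      moreover have "\<not> (lt w z \<and> lt z x)" using lin_on_trans[OF lin wA zA x] lin_on_asym[OF lin x wA xw] by blast
      ultimately show "lt x z" "lt z w" by blast+
    qed
    have "sim1 A lt x z" using sim1_between(1)[OF lin x zA wA xz zw] sim1_sym[OF sw] by blast
    then have zs: "z \<in> succs A lt x" unfolding succs_def using zA xz sim1_sym by blast
    have sub: "betw A lt x z \<subseteq> betw A lt x w" by (rule betw_mono(2)[OF lin x zA wA xz zw])
    have "z \<notin> betw A lt x z" using lin_on_irrefl[OF lin zA] by (simp add: betw_iff)
    then have "betw A lt x z \<subset> betw A lt x w" using sub z by blast
    then have "f z < f w" unfolding f_def using fin psubset_card_mono by blast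
    then show False using wmin[OF zs] by simp
  qed
qed

lemma infinite_succs_of_succ:
  assumes x: "x \<in> A" and w: "w \<in> succs A lt x" and inf: "infinite (succs A lt x)"
  shows "infinite (succs A lt w)"
proof
  assume fw: "finite (succs A lt w)"
  have wA: "w \<in> A" and xw: "lt x w" and sw: "sim1 A lt w x" using w unfolding succs_def by auto
  have fb: "finite (betw A lt x w)" using sw sim1_sym unfolding sim1_def by blast
  have "succs A lt x \<subseteq> betw A lt x w \<union> {w} \<union> succs A lt w"
  proof
    fix u assume u: "u \<in> succs A lt x"
    then have uA: "u \<in> A" and xu: "lt x u" and su: "sim1 A lt u x" unfolding succs_def by auto
    show "u \<in> betw A lt x w \<union> {w} \<union> succs A lt w"
    proof (cases "u = w")
      case False
      then consider "lt u w" | "lt w u" using lin_on_total[OF lin uA wA] by blast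
      then show ?thesis
      proof cases
        case 1 then show ?thesis using xu uA by (simp add: betw_iff)
      next
        case 2
        have "sim1 A lt u w" using sim1_trans[OF lin uA x wA su sim1_sym[OF sw]] .
        then show ?thesis using 2 uA unfolding succs_def by blast
      qed
    qed simp
  qed
  then show False using inf fb fw finite_subset by blast
qed

lemma succ_at_distance:
  assumes x: "x \<in> A" and inf: "infinite (succs A lt x)"
  shows "\<exists>z\<in>succs A lt x. card (betw A lt x z) = d \<and> infinite (succs A lt z)"
proof (induction d)
  case 0
  have "succs A lt x \<noteq> {}" using inf by auto
  then obtain w where w: "w \<in> succs A lt x" "betw A lt x w = {}" using immediate_succ[OF x] by blast
  moreover have "card (betw A lt x w) = 0" using w(2) by simp
  ultimately show ?case using infinite_succs_of_succ[OF x w(1) inf] by blast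
next
  case (Suc d)
  then obtain z where z: "z \<in> succs A lt x" "card (betw A lt x z) = d" "infinite (succs A lt z)" by blast
  have zA: "z \<in> A" and xz: "lt x z" and sim_zx: "sim1 A lt z x" using z unfolding succs_def by auto
  have "succs A lt z \<noteq> {}" using z(3) by auto
  then obtain w where w: "w \<in> succs A lt z" "betw A lt z w = {}" using immediate_succ[OF zA] by blast
  have wA: "w \<in> A" and zw: "lt z w" and swz: "sim1 A lt w z" using w unfolding succs_def by auto
  have xw: "lt x w" using lin_on_trans[OF lin x zA wA xz zw] .
  have swx: "sim1 A lt w x" using sim1_trans[OF lin wA zA x swz sim_zx] .
  have ws: "w \<in> succs A lt x" unfolding succs_def using wA xw swx by blast
  have fin: "finite (betw A lt x w)" using swx sim1_sym unfolding sim1_def by blast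
  have "card (betw A lt x w) = card (betw A lt x z) + 1 + card (betw A lt z w)"
    by (rule card_betw_split[OF lin x zA wA xz zw fin])
  then have "card (betw A lt x w) = Suc d" using z(2) w(2) by simp
  moreover have "infinite (succs A lt w)" using infinite_succs_of_succ[OF zA w(1) z(3)] .
  ultimately show ?case using ws by blast
qed

lemma preds_of_succ:
  assumes x: "x \<in> A" and z: "z \<in> succs A lt x"
  shows "preds A lt z = preds A lt x \<union> {x} \<union> betw A lt x z"
proof -
  have zA: "z \<in> A" and xz: "lt x z" and sim_zx: "sim1 A lt z x" using z unfolding succs_def by auto
  show ?thesis
  proof (intro set_eqI iffI)
    fix u assume u: "u \<in> preds A lt z"
    then have uA: "u \<in> A" and uz: "lt u z" and su: "sim1 A lt u z" unfolding preds_def by auto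
    consider "u = x" | "lt u x" | "lt x u" using lin_on_total[OF lin uA x] by blast
    then show "u \<in> preds A lt x \<union> {x} \<union> betw A lt x z"
    proof cases
      case 2
      then show ?thesis using sim1_trans[OF lin uA zA x su sim_zx] uA unfolding preds_def by blast
    qed (use uz uA in \<open>simp_all add: betw_iff\<close>)
  next
    fix u assume "u \<in> preds A lt x \<union> {x} \<union> betw A lt x z"
    then consider "u \<in> preds A lt x" | "u = x" | "u \<in> betw A lt x z" by blast
    then show "u \<in> preds A lt z"
    proof cases
      case 1
      then have uA: "u \<in> A" and ux: "lt u x" and su: "sim1 A lt u x" unfolding preds_def by auto
      then show ?thesis
        using lin_on_trans[OF lin uA x zA ux xz] sim1_trans[OF lin uA x zA su sim1_sym[OF sim_zx]]
        unfolding preds_def by blast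
    next
      case 2
      then show ?thesis using x xz sim_zx sim1_sym unfolding preds_def by blast
    next
      case 3
      then have uA: "u \<in> A" and "lt x u \<and> lt u z \<or> lt z u \<and> lt u x" by (simp_all add: betw_iff)
      moreover have "\<not> (lt z u \<and> lt u x)"
        using lin_on_trans[OF lin zA uA x] lin_on_asym[OF lin x zA xz] by blast
      ultimately have "lt x u" "lt u z" by blast+
      then show ?thesis
        using sim1_between(2)[OF lin x uA zA _ _ sim1_sym[OF sim_zx]] uA unfolding preds_def by blast
    qed
  qed
qed

lemma preds_betw_disjoint:
  assumes x: "x \<in> A" and z: "z \<in> succs A lt x"
  shows "x \<notin> preds A lt x" "x \<notin> betw A lt x z" "preds A lt x \<inter> betw A lt x z = {}"
proof -
  show "x \<notin> preds A lt x" "x \<notin> betw A lt x z"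
    using lin_on_irrefl[OF lin x] unfolding preds_def by (simp_all add: betw_iff)
  have zA: "z \<in> A" and xz: "lt x z" using z unfolding succs_def by auto
  show "preds A lt x \<inter> betw A lt x z = {}"
    using lin_on_asym[OF lin _ x] lin_on_trans[OF lin zA _ x] lin_on_asym[OF lin x zA xz]
    unfolding preds_def betw_def by blast
qed

lemma not_Ppred_far_succ:
  assumes "x \<in> A" "z \<in> succs A lt x" "j < card (betw A lt x z)"
  shows "\<not> Ppred A lt j z"
proof
  assume "Ppred A lt j z"
  then have "finite (preds A lt z)" "card (preds A lt z) = j" by (simp_all add: Ppred_iff)
  moreover have "betw A lt x z \<subseteq> preds A lt z" using preds_of_succ[OF assms(1,2)] by blast
  ultimately have "card (betw A lt x z) \<le> j" by (metis card_mono)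
  with assms(3) show False by simp
qed

lemma card_preds_of_succ:
  assumes x: "x \<in> A" and z: "z \<in> succs A lt x" and fin: "finite (preds A lt x)"
  shows "finite (preds A lt z)" "card (preds A lt z) = card (preds A lt x) + 1 + card (betw A lt x z)"
proof -
  have sim_zx: "sim1 A lt z x" using z unfolding succs_def by auto
  have fb: "finite (betw A lt x z)" using sim_zx sim1_sym unfolding sim1_def by blast
  note e = preds_of_succ[OF x z] preds_betw_disjoint[OF x z]
  show "finite (preds A lt z)" using e(1) fin fb by simp
  have "card (preds A lt x \<union> {x} \<union> betw A lt x z) = card (preds A lt x \<union> {x}) + card (betw A lt x z)"
    by (rule card_Un_disjoint) (use fin fb e(3,4) in auto)
  also have "card (preds A lt x \<union> {x}) = card (preds A lt x) + 1" using fin e(2) by simp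
  finally show "card (preds A lt z) = card (preds A lt x) + 1 + card (betw A lt x z)" using e(1) by simp
qed

lemma Adj_self_iff: "y \<in> A \<Longrightarrow> Adj A lt k y y \<longleftrightarrow> k = 0"
  unfolding Adj_iff using betw_self[OF lin] by auto

lemma sim1_classD: "y \<in> sim1_class A lt x \<Longrightarrow> y \<in> A"
  unfolding sim1_class_def by auto

lemma sim1_class_self: "x \<in> A \<Longrightarrow> x \<in> sim1_class A lt x"
  unfolding sim1_class_def using sim1_refl[OF lin] by auto

lemma sim1_class_eq:
  assumes "x \<in> A" "y \<in> sim1_class A lt x"
  shows "sim1_class A lt y = sim1_class A lt x"
proof -
  have yA: "y \<in> A" and s: "sim1 A lt x y" using assms(2) unfolding sim1_class_def by auto
  show ?thesis unfolding sim1_class_def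
    using sim1_trans[OF lin _ yA assms(1) _ sim1_sym[OF s]] sim1_trans[OF lin _ assms(1) yA _ s] sim1_sym
    by blast
qed

lemma class_size_eq: "x \<in> A \<Longrightarrow> y \<in> sim1_class A lt x \<Longrightarrow> class_size A lt y = class_size A lt x"
  unfolding class_size_def using sim1_class_eq by simp

lemma succsI: "y \<in> A \<Longrightarrow> z \<in> A \<Longrightarrow> lt y z \<Longrightarrow> sim1 A lt y z \<Longrightarrow> z \<in> succs A lt y"
  unfolding succs_def using sim1_sym by blast

lemma sim1_class_sim1: "y \<in> sim1_class A lt x \<Longrightarrow> z \<in> sim1_class A lt x \<Longrightarrow> x \<in> A \<Longrightarrow> sim1 A lt y z"
  unfolding sim1_class_def using sim1_trans[OF lin] sim1_sym by blast

lemma not_sim1_classes_lt: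
  assumes "u0 \<in> A" "v0 \<in> A" "lt u0 v0" "\<not> sim1 A lt u0 v0" "u \<in> sim1_class A lt u0" "v \<in> sim1_class A lt v0"
  shows "lt u v" "\<not> sim1 A lt u v"
proof -
  have uA: "u \<in> A" and vA: "v \<in> A" using assms sim1_classD by auto
  have su: "sim1 A lt u0 u" and sv: "sim1 A lt v0 v" using assms(5,6) unfolding sim1_class_def by auto
  show ns: "\<not> sim1 A lt u v"
  proof
    assume "sim1 A lt u v"
    then have "sim1 A lt u0 v" using sim1_trans[OF lin assms(1) uA vA su] by blast
    then have "sim1 A lt u0 v0" using sim1_trans[OF lin assms(1) vA assms(2) _ sim1_sym[OF sv]] by blast
    then show False using assms(4) by simp
  qed
  have uv0: "lt u v0"
  proof (rule ccontr)
    assume "\<not> lt u v0"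
    moreover have "u \<noteq> v0" using assms(4) su by auto
    ultimately have "lt v0 u" using lin_on_total[OF lin uA assms(2)] by blast
    then have "sim1 A lt u0 v0" using sim1_between(1)[OF lin assms(1) assms(2) uA assms(3) _ su] by blast
    then show False using assms(4) by simp
  qed
  show "lt u v"
  proof (rule ccontr)
    assume "\<not> lt u v"
    moreover have "u \<noteq> v" using ns sim1_refl[OF lin uA] by auto
    ultimately have "lt v u" using lin_on_total[OF lin uA vA] by blast
    then have "sim1 A lt u v0" using sim1_between(2)[OF lin vA uA assms(2) _ uv0 sim1_sym[OF sv]] by blast
    then have "sim1 A lt u0 v0" using sim1_trans[OF lin assms(1) uA assms(2) su] by blast
    then show False using assms(4) by simp
  qed
qed

end

lemma Adj_sym: "Adj A lt k a b \<longleftrightarrow> Adj A lt k b a"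
  unfolding Adj_iff using betw_sym by metis

section \<open>Structure of C(n,m)-homogeneous orderings\<close>

locale cnm_order = lin_order A lt for n m :: nat and A lt +
  assumes chom: "cnm_homogeneous n m A lt"
begin

abbreviation "tp \<equiv> cnm_tp n m A lt"

lemma automorphism_extending:
  assumes "finite D" "D \<subseteq> A" "inj_on p D" "p ` D \<subseteq> A"
    "\<And>x y. x \<in> D \<Longrightarrow> y \<in> D \<Longrightarrow> tp (p x) (p y) = tp x y"
  shows "\<exists>g. order_iso_map A lt A lt g \<and> (\<forall>x\<in>D. g x = p x)"
  by (rule cnm_homogeneousD[OF chom assms])

lemma automorphism_moving:
  assumes "x \<in> A" "x' \<in> A" "tp x x = tp x' x'"
  shows "\<exists>g. order_iso_map A lt A lt g \<and> g x = x'"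
proof -
  have "\<exists>g. order_iso_map A lt A lt g \<and> (\<forall>z\<in>{x}. g z = (\<lambda>_. x') z)"
    by (rule automorphism_extending) (use assms in auto)
  then show ?thesis by auto
qed

lemma tp_homogeneous_tp: "tp_homogeneous A tp"
  unfolding tp_homogeneous_def tp_embedding_def
proof (intro allI impI)
  fix D p
  assume "finite D \<and> D \<subseteq> A \<and> inj_on p D \<and> p ` D \<subseteq> A \<and> (\<forall>x\<in>D. \<forall>y\<in>D. tp (p x) (p y) = tp x y)"
  then obtain g where g: "order_iso_map A lt A lt g" "\<forall>x\<in>D. g x = p x"
    using automorphism_extending[of D p] by blast
  then show "\<exists>g. bij_betw g A A \<and> (\<forall>x\<in>A. \<forall>y\<in>A. tp (g x) (g y) = tp x y) \<and> (\<forall>x\<in>D. g x = p x)"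
    using order_iso_map_cnm_tp[OF g(1)] unfolding order_iso_map_def by blast
qed

lemma tp_eq: "tp a b = (lt a b, \<lambda>i. i < n \<and> Spred A lt i a, \<lambda>j. j < m \<and> Ppred A lt j a, \<lambda>k. k < n + m \<and> Adj A lt k a b)"
  unfolding cnm_tp_def ..

text \<open>Successors z, z' of x at distances n + m and n + m + 1 cannot be told apart by the
  predicates of the signature, so some automorphism fixes x and moves z to z'; but automorphisms
  preserve distances.\<close>

lemma finite_succs:
  assumes x: "x \<in> A"
  shows "finite (succs A lt x)"
proof (rule ccontr)
  assume inf: "infinite (succs A lt x)"
  obtain z where z: "z \<in> succs A lt x" "card (betw A lt x z) = n + m" "infinite (succs A lt z)"
    using succ_at_distance[OF x inf] by blast
  obtain z' where z': "z' \<in> succs A lt x" "card (betw A lt x z') = Suc (n + m)" "infinite (succs A lt z')"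
    using succ_at_distance[OF x inf] by blast
  have zA: "z \<in> A" "z' \<in> A" and xz: "lt x z" "lt x z'"
    using z(1) z'(1) unfolding succs_def by auto
  have far: "\<not> Spred A lt i w" "j < m \<Longrightarrow> \<not> Ppred A lt j w"
    "k < n + m \<Longrightarrow> \<not> Adj A lt k x w" "k < n + m \<Longrightarrow> \<not> Adj A lt k w x"
    if "w \<in> {z, z'}" for w i j k
    using that z z' not_Ppred_far_succ[OF x z(1)] not_Ppred_far_succ[OF x z'(1)] betw_sym[of A lt x w]
    by (auto simp: Spred_iff Adj_iff)
  define p where "p u = (if u = z then z' else u)" for u
  have "x \<noteq> z" using xz lin_on_irrefl[OF lin x] by auto
  have "\<exists>g. order_iso_map A lt A lt g \<and> (\<forall>u\<in>{x, z}. g u = p u)"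
  proof (rule automorphism_extending)
    show "inj_on p {x, z}" "p ` {x, z} \<subseteq> A"
      unfolding p_def using \<open>x \<noteq> z\<close> xz x zA lin_on_irrefl[OF lin x] by (auto simp: inj_on_def)
    have zz: "tp z' z' = tp z z"
      unfolding cnm_tp_eq_iff using far[of z] far[of z'] lin_on_irrefl[OF lin] zA Adj_self_iff by simp
    have xz': "tp x z' = tp x z"
      unfolding cnm_tp_eq_iff using xz far(3)[of z] far(3)[of z'] by simp
    have z'x: "tp z' x = tp z x"
      unfolding cnm_tp_eq_iff using lin_on_asym[OF lin x] zA xz far[of z] far[of z'] by simp
    show "tp (p a) (p b) = tp a b" if "a \<in> {x, z}" "b \<in> {x, z}" for a b
      using that \<open>x \<noteq> z\<close> zz xz' z'x unfolding p_def by auto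
  qed (use x zA in auto)
  then obtain g where g: "order_iso_map A lt A lt g" "g x = x" "g z = z'"
    unfolding p_def using \<open>x \<noteq> z\<close> by auto
  have "card (betw A lt x z') = card (betw A lt x z)"
    using order_iso_map_card_betw(1)[OF g(1) x zA(1)] g(2,3) by simp
  with z(2) z'(2) show False by simp
qed

lemma cnm_order_conversep: "cnm_order m n A lt\<inverse>\<inverse>"
  by unfold_locales (use lin_on_conversep[OF lin] cnm_homogeneous_conversep[OF chom] in auto)

lemma finite_preds: "x \<in> A \<Longrightarrow> finite (preds A lt x)"
  using cnm_order.finite_succs[OF cnm_order_conversep] unfolding succs_conversep .

lemma class_size_decomp: "x \<in> A \<Longrightarrow> class_size A lt x = class_pos A lt x + 1 + card (succs A lt x)"
proof -
  assume x: "x \<in> A"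
  have "card (preds A lt x \<union> {x} \<union> succs A lt x) = card (preds A lt x \<union> {x}) + card (succs A lt x)"
    by (rule card_Un_disjoint) (use finite_preds[OF x] finite_succs[OF x] sim1_class_disjoint[OF x] in auto)
  also have "card (preds A lt x \<union> {x}) = card (preds A lt x) + 1" using finite_preds[OF x] sim1_class_disjoint(1)[OF x] by simp
  finally show ?thesis unfolding class_size_def class_pos_def sim1_class_decomp[OF x] by simp
qed

lemma class_pos_less_size: "x \<in> A \<Longrightarrow> class_pos A lt x < class_size A lt x"
  using class_size_decomp by simp

lemma class_pos_succ: "x \<in> A \<Longrightarrow> z \<in> succs A lt x \<Longrightarrow> class_pos A lt z = class_pos A lt x + 1 + card (betw A lt x z)"
  unfolding class_pos_def using card_preds_of_succ(2) finite_preds by blast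

lemma class_pos_mono:
  assumes "x \<in> A" "y \<in> sim1_class A lt x" "z \<in> sim1_class A lt x" "lt y z"
  shows "class_pos A lt y < class_pos A lt z"
proof -
  have yA: "y \<in> A" and zA: "z \<in> A" using assms sim1_classD by auto
  have "z \<in> succs A lt y" by (rule succsI[OF yA zA assms(4) sim1_class_sim1[OF assms(2,3,1)]])
  then show ?thesis using class_pos_succ[OF yA] by simp
qed

lemma inj_on_class_pos: "x \<in> A \<Longrightarrow> inj_on (class_pos A lt) (sim1_class A lt x)"
proof (rule inj_onI)
  fix y z assume x: "x \<in> A" and y: "y \<in> sim1_class A lt x" and z: "z \<in> sim1_class A lt x" and e: "class_pos A lt y = class_pos A lt z"
  show "y = z"
  proof (rule ccontr)
    assume "y \<noteq> z"
    then have "lt y z \<or> lt z y" using lin_on_total[OF lin sim1_classD[OF y] sim1_classD[OF z]] by blast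
    then show False using class_pos_mono[OF x y z] class_pos_mono[OF x z y] e by auto
  qed
qed

lemma class_pos_image: "x \<in> A \<Longrightarrow> class_pos A lt ` sim1_class A lt x = {..<class_size A lt x}"
proof -
  assume x: "x \<in> A"
  have sub: "class_pos A lt ` sim1_class A lt x \<subseteq> {..<class_size A lt x}"
  proof
    fix p assume "p \<in> class_pos A lt ` sim1_class A lt x"
    then obtain y where y: "y \<in> sim1_class A lt x" "p = class_pos A lt y" by blast
    then show "p \<in> {..<class_size A lt x}" using class_pos_less_size[OF sim1_classD[OF y(1)]] class_size_eq[OF x y(1)] by simp
  qed
  have "card (class_pos A lt ` sim1_class A lt x) = class_size A lt x" unfolding class_size_def using card_image[OF inj_on_class_pos[OF x]] .
  then show ?thesis using card_subset_eq[OF _ sub] by simp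
qed

lemma class_pos_surj: "x \<in> A \<Longrightarrow> p < class_size A lt x \<Longrightarrow> \<exists>u\<in>sim1_class A lt x. class_pos A lt u = p"
  using class_pos_image by (metis image_iff lessThan_iff)

lemma Spred_iff_class: "y \<in> A \<Longrightarrow> Spred A lt i y \<longleftrightarrow> class_size A lt y - 1 - class_pos A lt y = i"
  unfolding Spred_iff using finite_succs class_size_decomp by simp

lemma Ppred_iff_class_pos: "y \<in> A \<Longrightarrow> Ppred A lt j y \<longleftrightarrow> class_pos A lt y = j"
  unfolding Ppred_iff class_pos_def using finite_preds by simp

lemma class_eq_if_tp_eq:
  assumes "x \<in> A" "x' \<in> A" "tp x x = tp x' x'"
  shows "class_size A lt x = class_size A lt x'" "class_pos A lt x = class_pos A lt x'"
proof -
  obtain g where g: "order_iso_map A lt A lt g" "g x = x'" using automorphism_moving[OF assms] by blast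
  have "g ` sim1_class A lt x = sim1_class A lt x'" using order_iso_map_sim1_class[OF g(1) assms(1)] g(2) by simp
  then show "class_size A lt x = class_size A lt x'" unfolding class_size_def using order_iso_map_card_image[OF g(1) sim1_class_subset] by metis
  have "g ` preds A lt x = preds A lt x'" using order_iso_map_preds[OF g(1) assms(1)] g(2) by simp
  then show "class_pos A lt x = class_pos A lt x'" unfolding class_pos_def using order_iso_map_card_image[OF g(1) preds_subset] by metis
qed

lemma class_size_le: "x \<in> A \<Longrightarrow> class_size A lt x \<le> n + m + 1"
proof (rule ccontr)
  assume x: "x \<in> A" and "\<not> class_size A lt x \<le> n + m + 1"
  then have big: "n + m + 2 \<le> class_size A lt x" by simp
  obtain y1 where y1: "y1 \<in> sim1_class A lt x" "class_pos A lt y1 = m" using class_pos_surj[OF x, of m] big by auto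
  obtain y2 where y2: "y2 \<in> sim1_class A lt x" "class_pos A lt y2 = Suc m" using class_pos_surj[OF x, of "Suc m"] big by auto
  have y1A: "y1 \<in> A" and y2A: "y2 \<in> A" using y1 y2 sim1_classD by auto
  have s1: "class_size A lt y1 = class_size A lt x" "class_size A lt y2 = class_size A lt x" using class_size_eq[OF x] y1 y2 by auto
  have S: "\<not> Spred A lt i y1" "\<not> Spred A lt i y2" if "i < n" for i
    using that s1 y1(2) y2(2) big Spred_iff_class[OF y1A] Spred_iff_class[OF y2A] by auto
  have P: "\<not> Ppred A lt j y1" "\<not> Ppred A lt j y2" if "j < m" for j
    using that y1(2) y2(2) Ppred_iff_class_pos[OF y1A] Ppred_iff_class_pos[OF y2A] by auto
  have "tp y1 y1 = tp y2 y2"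
    unfolding cnm_tp_eq_iff using S P lin_on_irrefl[OF lin] y1A y2A Adj_self_iff by simp
  then have "class_pos A lt y1 = class_pos A lt y2" using class_eq_if_tp_eq[OF y1A y2A] by simp
  then show False using y1 y2 by simp
qed

lemma Adj_iff_class_pos:
  assumes "a \<in> A" "b \<in> A" "lt a b" "sim1 A lt a b"
  shows "Adj A lt k a b \<longleftrightarrow> class_pos A lt b - class_pos A lt a - 1 = k"
proof -
  have bs: "b \<in> succs A lt a" by (rule succsI[OF assms])
  have "finite (betw A lt a b)" using assms(4) unfolding sim1_def .
  then show ?thesis unfolding Adj_iff using class_pos_succ[OF assms(1) bs] by auto
qed

lemma not_Adj_if_not_sim1: "\<not> sim1 A lt a b \<Longrightarrow> \<not> Adj A lt k a b"
  unfolding Adj_iff sim1_def by simp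

lemma sim1_iff_Adj:
  assumes "a \<in> A" "b \<in> A" "a \<noteq> b"
  shows "sim1 A lt a b \<longleftrightarrow> (\<exists>k<n+m. Adj A lt k a b)"
proof
  assume s: "sim1 A lt a b"
  have main: "\<exists>k<n+m. Adj A lt k a b" if ab: "a \<in> A" "b \<in> A" "lt a b" "sim1 A lt a b" for a b
  proof -
    have bs: "b \<in> succs A lt a" by (rule succsI[OF ab])
    have "b \<in> sim1_class A lt a" using ab unfolding sim1_class_def by blast
    then have "class_pos A lt b < class_size A lt a" using class_pos_less_size[OF ab(2)] class_size_eq[OF ab(1)] by simp
    then have "class_pos A lt b \<le> n + m" using class_size_le[OF ab(1)] by simp
    moreover have "class_pos A lt b = class_pos A lt a + 1 + card (betw A lt a b)" using class_pos_succ[OF ab(1) bs] .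
    ultimately have "card (betw A lt a b) < n + m" by simp
    moreover have "Adj A lt (card (betw A lt a b)) a b" using ab(4) unfolding Adj_iff sim1_def by simp
    ultimately show ?thesis by blast
  qed
  consider "lt a b" | "lt b a" using lin_on_total[OF lin assms] by blast
  then show "\<exists>k<n+m. Adj A lt k a b"
  proof cases
    case 1 then show ?thesis using main[OF assms(1,2) 1 s] by blast
  next
    case 2 then show ?thesis using main[OF assms(2,1) 2 sim1_sym[OF s]] Adj_sym by blast
  qed
next
  assume "\<exists>k<n+m. Adj A lt k a b"
  then show "sim1 A lt a b" using not_Adj_if_not_sim1 by blast
qed

lemma tp_diag: "y \<in> A \<Longrightarrow> tp y y = (False, \<lambda>i. i < n \<and> class_size A lt y - 1 - class_pos A lt y = i, \<lambda>j. j < m \<and> class_pos A lt y = j, \<lambda>k. k < n + m \<and> k = 0)"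
  unfolding tp_eq using lin_on_irrefl[OF lin] Spred_iff_class Ppred_iff_class_pos Adj_self_iff by (simp add: fun_eq_iff)

lemma tp_sim1:
  assumes "a \<in> A" "b \<in> A" "lt a b" "sim1 A lt a b"
  shows "tp a b = (True, \<lambda>i. i < n \<and> class_size A lt a - 1 - class_pos A lt a = i, \<lambda>j. j < m \<and> class_pos A lt a = j,
                    \<lambda>k. k < n + m \<and> class_pos A lt b - class_pos A lt a - 1 = k)"
    and "tp b a = (False, \<lambda>i. i < n \<and> class_size A lt b - 1 - class_pos A lt b = i, \<lambda>j. j < m \<and> class_pos A lt b = j,
                    \<lambda>k. k < n + m \<and> class_pos A lt b - class_pos A lt a - 1 = k)"
  unfolding tp_eq using assms Spred_iff_class Ppred_iff_class_pos Adj_iff_class_pos[OF assms] Adj_sym lin_on_asym[OF lin assms(1,2,3)]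
  by (simp_all add: fun_eq_iff)

lemma tp_not_sim1:
  assumes "a \<in> A" "b \<in> A" "\<not> sim1 A lt a b"
  shows "tp a b = (lt a b, \<lambda>i. i < n \<and> class_size A lt a - 1 - class_pos A lt a = i, \<lambda>j. j < m \<and> class_pos A lt a = j, \<lambda>k. False)"
  unfolding tp_eq using assms Spred_iff_class Ppred_iff_class_pos not_Adj_if_not_sim1 by (simp add: fun_eq_iff)

end

section \<open>A complete invariant\<close>

definition class_sizes :: "nat set \<Rightarrow> (nat \<Rightarrow> nat \<Rightarrow> bool) \<Rightarrow> nat set" where
  "class_sizes A lt = class_size A lt ` A"
definition class_size_order :: "nat set \<Rightarrow> (nat \<Rightarrow> nat \<Rightarrow> bool) \<Rightarrow> (nat \<times> nat) set" where
  "class_size_order A lt = {(class_size A lt x, class_size A lt y) | x y. x \<in> A \<and> y \<in> A \<and> lt x y \<and> \<not> sim1 A lt x y}"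

locale cnm_order_pair = a: cnm_order n m A lt + b: cnm_order n m B lt' for n m A lt B lt'
begin

abbreviation "tpA \<equiv> cnm_tp n m A lt"
abbreviation "tpB \<equiv> cnm_tp n m B lt'"

lemma tp_diag_realised:
  assumes x: "x \<in> A" and sizes: "class_sizes A lt \<subseteq> class_sizes B lt'"
  shows "\<exists>u\<in>B. tpB u u = tpA x x"
proof -
  have "class_size A lt x \<in> class_sizes B lt'" using sizes x unfolding class_sizes_def by auto
  then obtain w where w: "w \<in> B" "class_size B lt' w = class_size A lt x" unfolding class_sizes_def by auto
  have "class_pos A lt x < class_size B lt' w" using a.class_pos_less_size[OF x] w by simp
  then obtain u where u: "u \<in> sim1_class B lt' w" "class_pos B lt' u = class_pos A lt x" using b.class_pos_surj[OF w(1)] by blast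
  have uB: "u \<in> B" using b.sim1_classD[OF u(1)] .
  have "class_size B lt' u = class_size A lt x" using b.class_size_eq[OF w(1) u(1)] w by simp
  then show ?thesis using b.tp_diag[OF uB] a.tp_diag[OF x] u uB by auto
qed

lemma tp_pair_realised_sim1:
  assumes x: "x \<in> A" and y: "y \<in> A" and yx: "lt y x" "sim1 A lt y x"
    and sizes: "class_sizes A lt \<subseteq> class_sizes B lt'"
  obtains u v where "u \<in> B" "v \<in> B" "tpB u v = tpA y x" "tpB v u = tpA x y"
    "tpB u u = tpA y y" "tpB v v = tpA x x"
proof -
  have xc: "x \<in> sim1_class A lt y" using yx(2) x unfolding sim1_class_def by blast
  have szx: "class_size A lt x = class_size A lt y" using a.class_size_eq[OF y xc] .
  have pyx: "class_pos A lt y < class_pos A lt x" using a.class_pos_mono[OF y a.sim1_class_self[OF y] xc yx(1)] .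
  have px: "class_pos A lt x < class_size A lt y" using a.class_pos_less_size[OF x] szx by simp
  have "class_size A lt y \<in> class_sizes B lt'" using sizes y unfolding class_sizes_def by auto
  then obtain w where w: "w \<in> B" "class_size B lt' w = class_size A lt y" unfolding class_sizes_def by auto
  obtain u where u: "u \<in> sim1_class B lt' w" "class_pos B lt' u = class_pos A lt y"
    using b.class_pos_surj[OF w(1), of "class_pos A lt y"] pyx px w by auto
  obtain v where v: "v \<in> sim1_class B lt' w" "class_pos B lt' v = class_pos A lt x"
    using b.class_pos_surj[OF w(1), of "class_pos A lt x"] px w by auto
  have uB: "u \<in> B" and vB: "v \<in> B" using u v b.sim1_classD by auto
  have suv: "sim1 B lt' u v" using b.sim1_class_sim1[OF u(1) v(1) w(1)] .
  have szu: "class_size B lt' u = class_size A lt y" "class_size B lt' v = class_size A lt y"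
    using b.class_size_eq[OF w(1)] u v w by auto
  have uv: "lt' u v"
  proof (rule ccontr)
    assume "\<not> lt' u v"
    moreover have "u \<noteq> v" using u v pyx by auto
    ultimately have "lt' v u" using lin_on_total[OF b.lin uB vB] by blast
    then have "class_pos B lt' v < class_pos B lt' u" using b.class_pos_mono[OF w(1) v(1) u(1)] by simp
    then show False using u v pyx by simp
  qed
  show ?thesis
    using uB vB b.tp_sim1[OF uB vB uv suv] a.tp_sim1[OF y x yx] b.tp_diag[OF uB] b.tp_diag[OF vB]
      a.tp_diag[OF x] a.tp_diag[OF y] u(2) v(2) szu szx
    by (intro that[of u v]) simp_all
qed

lemma tp_pair_realised_not_sim1:
  assumes x: "x \<in> A" and y: "y \<in> A" and yx: "lt y x" "\<not> sim1 A lt y x"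
    and order: "class_size_order A lt \<subseteq> class_size_order B lt'"
  obtains u v where "u \<in> B" "v \<in> B" "tpB u v = tpA y x" "tpB v u = tpA x y"
    "tpB u u = tpA y y" "tpB v v = tpA x x"
proof -
  have "(class_size A lt y, class_size A lt x) \<in> class_size_order B lt'"
    using order x y yx unfolding class_size_order_def by blast
  then obtain u0 v0 where uv0: "u0 \<in> B" "v0 \<in> B" "lt' u0 v0" "\<not> sim1 B lt' u0 v0"
    "class_size B lt' u0 = class_size A lt y" "class_size B lt' v0 = class_size A lt x"
    unfolding class_size_order_def by auto
  obtain u where u: "u \<in> sim1_class B lt' u0" "class_pos B lt' u = class_pos A lt y"
    using b.class_pos_surj[OF uv0(1), of "class_pos A lt y"] a.class_pos_less_size[OF y] uv0(5) by auto
  obtain v where v: "v \<in> sim1_class B lt' v0" "class_pos B lt' v = class_pos A lt x"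
    using b.class_pos_surj[OF uv0(2), of "class_pos A lt x"] a.class_pos_less_size[OF x] uv0(6) by auto
  have uB: "u \<in> B" and vB: "v \<in> B" using u v b.sim1_classD by auto
  have uv: "lt' u v" "\<not> sim1 B lt' u v" "\<not> sim1 B lt' v u"
    using b.not_sim1_classes_lt[OF uv0(1-4) u(1) v(1)] sim1_sym by blast+
  have szu: "class_size B lt' u = class_size A lt y" "class_size B lt' v = class_size A lt x"
    using b.class_size_eq uv0 u v by auto
  have "\<not> sim1 A lt x y" using yx(2) sim1_sym by blast
  moreover have "\<not> lt x y" "\<not> lt' v u"
    using lin_on_asym[OF a.lin y x yx(1)] lin_on_asym[OF b.lin uB vB uv(1)] .
  ultimately show ?thesis
    using uB vB uv b.tp_not_sim1[OF uB vB] b.tp_not_sim1[OF vB uB] a.tp_not_sim1[OF y x yx(2)]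
      a.tp_not_sim1[OF x y] b.tp_diag[OF uB] b.tp_diag[OF vB] a.tp_diag[OF x] a.tp_diag[OF y]
      u(2) v(2) szu yx(1)
    by (intro that[of u v]) simp_all
qed

lemma tp_pair_realised:
  assumes "x \<in> A" "y \<in> A" "lt y x"
    and "class_sizes A lt \<subseteq> class_sizes B lt'" "class_size_order A lt \<subseteq> class_size_order B lt'"
  obtains u v where "u \<in> B" "v \<in> B" "tpB u v = tpA y x" "tpB v u = tpA x y"
    "tpB u u = tpA y y" "tpB v v = tpA x x"
proof (cases "sim1 A lt y x")
  case True
  show ?thesis by (rule tp_pair_realised_sim1[OF assms(1-3) True assms(4) that])
next
  case False
  show ?thesis by (rule tp_pair_realised_not_sim1[OF assms(1-3) False assms(5) that])
qed

lemma sim1_transfer: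
  assumes a: "a1 \<in> B" "a2 \<in> B" "a1 \<noteq> a2" and c: "c1 \<in> A" "c2 \<in> A" "c1 \<noteq> c2"
    and Adj: "\<forall>k<n+m. Adj B lt' k a1 a2 \<longleftrightarrow> Adj A lt k c1 c2"
  shows "sim1 B lt' a1 a2 \<longleftrightarrow> sim1 A lt c1 c2"
    and "sim1 A lt c1 c2 \<Longrightarrow> card (betw B lt' a1 a2) = card (betw A lt c1 c2)"
proof -
  show "sim1 B lt' a1 a2 \<longleftrightarrow> sim1 A lt c1 c2"
    using a.sim1_iff_Adj[OF c] b.sim1_iff_Adj[OF a] Adj by blast
  assume "sim1 A lt c1 c2"
  then obtain k where "k < n + m" "Adj A lt k c1 c2" using a.sim1_iff_Adj[OF c] by blast
  with Adj have "Adj B lt' k a1 a2" "Adj A lt k c1 c2" by blast+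
  then show "card (betw B lt' a1 a2) = card (betw A lt c1 c2)" unfolding Adj_iff by simp
qed

lemma Adj_compose:
  assumes a: "a1 \<in> B" "a2 \<in> B" "a3 \<in> B" "lt' a1 a2" "lt' a2 a3"
    and c: "c1 \<in> A" "c2 \<in> A" "c3 \<in> A" "lt c1 c2" "lt c2 c3"
    and Adj12: "\<forall>k<n+m. Adj B lt' k a1 a2 \<longleftrightarrow> Adj A lt k c1 c2"
    and Adj23: "\<forall>k<n+m. Adj B lt' k a2 a3 \<longleftrightarrow> Adj A lt k c2 c3"
  shows "Adj B lt' k a1 a3 \<longleftrightarrow> Adj A lt k c1 c3"
proof -
  have "a1 \<noteq> a2" "a2 \<noteq> a3" "c1 \<noteq> c2" "c2 \<noteq> c3"
    using a c lin_on_irrefl[OF a.lin] lin_on_irrefl[OF b.lin] by auto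
  note t12 = sim1_transfer[OF a(1,2) \<open>a1 \<noteq> a2\<close> c(1,2) \<open>c1 \<noteq> c2\<close> Adj12]
    and t23 = sim1_transfer[OF a(2,3) \<open>a2 \<noteq> a3\<close> c(2,3) \<open>c2 \<noteq> c3\<close> Adj23]
  show ?thesis
  proof (cases "sim1 A lt c1 c3")
    case True
    then have "sim1 A lt c1 c2" "sim1 A lt c2 c3" using sim1_between[OF a.lin c True] by auto
    with t12 t23 have "sim1 B lt' a1 a2" "sim1 B lt' a2 a3"
      and "card (betw B lt' a1 a2) = card (betw A lt c1 c2)" "card (betw B lt' a2 a3) = card (betw A lt c2 c3)"
      by blast+
    moreover from this(1,2) have "sim1 B lt' a1 a3" using sim1_trans[OF b.lin a(1-3)] by blast
    ultimately have "card (betw B lt' a1 a3) = card (betw A lt c1 c3)"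
      using card_betw_split[OF b.lin a] card_betw_split[OF a.lin c] True unfolding sim1_def by simp
    then show ?thesis using \<open>sim1 B lt' a1 a3\<close> True unfolding Adj_iff sim1_def by simp
  next
    case False
    have "\<not> sim1 B lt' a1 a3"
    proof
      assume "sim1 B lt' a1 a3"
      then have "sim1 B lt' a1 a2" "sim1 B lt' a2 a3" using sim1_between[OF b.lin a] by auto
      with t12 t23 have "sim1 A lt c1 c3" using sim1_trans[OF a.lin c(1-3)] by blast
      with False show False ..
    qed
    with False show ?thesis by (simp add: Adj_iff sim1_def)
  qed
qed

lemma cnm_tp_compose:
  assumes a: "a1 \<in> B" "a2 \<in> B" "a3 \<in> B" and c: "c1 \<in> A" "c2 \<in> A" "c3 \<in> A" "lt c1 c2" "lt c2 c3"
    and tp12: "tpB a1 a2 = tpA c1 c2" and tp23: "tpB a2 a3 = tpA c2 c3"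
    and tp1: "tpB a1 a1 = tpA c1 c1" and tp3: "tpB a3 a3 = tpA c3 c3"
  shows "tpB a1 a3 = tpA c1 c3 \<and> tpB a3 a1 = tpA c3 c1"
proof -
  have lt12: "lt' a1 a2" and lt23: "lt' a2 a3" using tp12 tp23 c(4,5) unfolding cnm_tp_eq_iff by simp_all
  have lt13: "lt' a1 a3" "lt c1 c3" using lin_on_trans[OF b.lin a lt12 lt23] lin_on_trans[OF a.lin c] .
  have Adj13: "Adj B lt' k a1 a3 \<longleftrightarrow> Adj A lt k c1 c3" for k
    by (rule Adj_compose[OF a lt12 lt23 c]) (use tp12 tp23 in \<open>simp_all add: cnm_tp_eq_iff\<close>)
  have Adj31: "Adj B lt' k a3 a1 \<longleftrightarrow> Adj A lt k c3 c1" for k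
    using Adj13[of k] Adj_sym[of B lt' k a3 a1] Adj_sym[of A lt k c3 c1] by simp
  have "\<not> lt' a3 a1" "\<not> lt c3 c1"
    using lin_on_asym[OF b.lin a(1,3) lt13(1)] lin_on_asym[OF a.lin c(1,3) lt13(2)] .
  moreover have "(\<forall>i<n. Spred B lt' i a1 \<longleftrightarrow> Spred A lt i c1) \<and> (\<forall>j<m. Ppred B lt' j a1 \<longleftrightarrow> Ppred A lt j c1)"
    "(\<forall>i<n. Spred B lt' i a3 \<longleftrightarrow> Spred A lt i c3) \<and> (\<forall>j<m. Ppred B lt' j a3 \<longleftrightarrow> Ppred A lt j c3)"
    using tp1 tp3 unfolding cnm_tp_eq_iff by blast+
  ultimately show ?thesis using lt13 Adj13 Adj31 unfolding cnm_tp_eq_iff by blast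
qed

lemma finitely_embeds_cnm_tp:
  assumes sizes: "class_sizes A lt \<subseteq> class_sizes B lt'"
    and order: "class_size_order A lt \<subseteq> class_size_order B lt'"
  shows "finitely_embeds A tpA B tpB"
proof (rule finitely_embeds_by_top_extension[OF a.lin])
  show "tpA y x \<noteq> tpA x x" if "x \<in> A" "lt y x" for x y
    using that lin_on_irrefl[OF a.lin] unfolding cnm_tp_def by auto
  fix F x h
  assume F: "finite F" "F \<subseteq> A" and xA: "x \<in> A" and below: "\<And>z. z \<in> F \<Longrightarrow> lt z x"
    and h: "tp_embedding F tpA B tpB h"
  have hB: "h z \<in> B" if "z \<in> F" for z
    using h that unfolding tp_embedding_def by auto
  have h_tp: "tpB (h z) (h w) = tpA z w" if "z \<in> F" "w \<in> F" for z w
    using h that unfolding tp_embedding_def by auto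
  show "\<exists>b\<in>B. tpB b b = tpA x x \<and> (\<forall>z\<in>F. tpB (h z) b = tpA z x \<and> tpB b (h z) = tpA x z)"
  proof (cases "F = {}")
    case True
    then show ?thesis using tp_diag_realised[OF xA sizes] by blast
  next
    case False
    obtain y where y: "y \<in> F" "\<And>z. z \<in> F \<Longrightarrow> z \<noteq> y \<Longrightarrow> lt z y"
      using lin_on_finite_has_max[OF a.lin F(1) False F(2)] by blast
    have yA: "y \<in> A" and yx: "lt y x" using y(1) F(2) below by auto
    obtain u v where uv: "u \<in> B" "v \<in> B" "tpB u v = tpA y x" "tpB v u = tpA x y"
      "tpB u u = tpA y y" "tpB v v = tpA x x"
      by (rule tp_pair_realised[OF xA yA yx sizes order])
    have "tpB (h y) (h y) = tpB u u" using uv(5) h_tp[OF y(1) y(1)] by simp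
    then obtain b where b: "b \<in> B" "tpB (h y) b = tpA y x" "tpB b (h y) = tpA x y" "tpB b b = tpA x x"
      using tp_homogeneous_move_pair[OF b.tp_homogeneous_tp uv(1,2) hB[OF y(1)]] uv(3,4,6) by metis
    have "tpB (h z) b = tpA z x \<and> tpB b (h z) = tpA x z" if z: "z \<in> F" for z
    proof (cases "z = y")
      case False
      then show ?thesis
        using cnm_tp_compose[OF hB[OF z] hB[OF y(1)] b(1) _ yA xA _ yx h_tp[OF z y(1)] b(2) h_tp[OF z z] b(4)]
          z F(2) y(2) by blast
    qed (use b in simp)
    with b show ?thesis by blast
  qed
qed

end

lemma order_iso_map_class_size: "order_iso_map A lt B lt' f \<Longrightarrow> x \<in> A \<Longrightarrow> class_size B lt' (f x) = class_size A lt x"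
  unfolding class_size_def using order_iso_map_sim1_class order_iso_map_card_image sim1_class_subset by metis

lemma order_iso_map_cnm_invariant:
  assumes f: "order_iso_map A lt B lt' f"
  shows "class_sizes A lt = class_sizes B lt'" "class_size_order A lt = class_size_order B lt'"
proof -
  have fB: "f ` A = B" using f unfolding order_iso_map_def bij_betw_def by auto
  show "class_sizes A lt = class_sizes B lt'" unfolding class_sizes_def using order_iso_map_class_size[OF f] fB by force
  show "class_size_order A lt = class_size_order B lt'"
  proof
    show "class_size_order A lt \<subseteq> class_size_order B lt'"
    proof
      fix c assume "c \<in> class_size_order A lt"
      then obtain x y where xy: "x \<in> A" "y \<in> A" "lt x y" "\<not> sim1 A lt x y" "c = (class_size A lt x, class_size A lt y)"
        unfolding class_size_order_def by blast
      then have "f x \<in> B" "f y \<in> B" "lt' (f x) (f y)" "\<not> sim1 B lt' (f x) (f y)" "c = (class_size B lt' (f x), class_size B lt' (f y))"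
        using order_iso_map_in[OF f] order_iso_map_lt[OF f] order_iso_map_sim1[OF f] order_iso_map_class_size[OF f] by auto
      then show "c \<in> class_size_order B lt'" unfolding class_size_order_def by blast
    qed
    show "class_size_order B lt' \<subseteq> class_size_order A lt"
    proof
      fix c assume "c \<in> class_size_order B lt'"
      then obtain x' y' where xy: "x' \<in> B" "y' \<in> B" "lt' x' y'" "\<not> sim1 B lt' x' y'" "c = (class_size B lt' x', class_size B lt' y')"
        unfolding class_size_order_def by blast
      obtain x where x: "x \<in> A" "x' = f x" using xy(1) fB by blast
      obtain y where y: "y \<in> A" "y' = f y" using xy(2) fB by blast
      have "lt x y" "\<not> sim1 A lt x y" "c = (class_size A lt x, class_size A lt y)"
        using xy x y order_iso_map_lt[OF f] order_iso_map_sim1[OF f] order_iso_map_class_size[OF f] by auto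
      then show "c \<in> class_size_order A lt" unfolding class_size_order_def using x y by blast
    qed
  qed
qed

definition cnm_invariant :: "nat set \<times> (nat \<Rightarrow> nat \<Rightarrow> bool) \<Rightarrow> nat set \<times> (nat \<times> nat) set" where
  "cnm_invariant X = (class_sizes (fst X) (snd X), class_size_order (fst X) (snd X))"

lemma CNM_orders_iff: "X \<in> CNM_orders n m \<longleftrightarrow> cnm_order n m (fst X) (snd X)"
  unfolding CNM_orders_def cnm_order_def cnm_order_axioms_def lin_order_def by (cases X) auto

lemma order_iso_iff_cnm_invariant:
  assumes "X \<in> CNM_orders n m" "Y \<in> CNM_orders n m"
  shows "order_iso X Y \<longleftrightarrow> cnm_invariant X = cnm_invariant Y"
proof -
  obtain A lt B lt' where XY: "X = (A, lt)" "Y = (B, lt')" by (cases X, cases Y)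
  interpret ab: cnm_order_pair n m A lt B lt'
    using assms CNM_orders_iff unfolding XY cnm_order_pair_def by simp
  interpret ba: cnm_order_pair n m B lt' A lt
    using assms CNM_orders_iff unfolding XY cnm_order_pair_def by simp
  show ?thesis
  proof
    assume "order_iso X Y"
    then obtain f where "order_iso_map A lt B lt' f"
      unfolding XY order_iso_def order_iso_map_def by auto
    then show "cnm_invariant X = cnm_invariant Y"
      unfolding XY cnm_invariant_def using order_iso_map_cnm_invariant by simp
  next
    assume "cnm_invariant X = cnm_invariant Y"
    then have "finitely_embeds A (cnm_tp n m A lt) B (cnm_tp n m B lt')"
      "finitely_embeds B (cnm_tp n m B lt') A (cnm_tp n m A lt)"
      using ab.finitely_embeds_cnm_tp ba.finitely_embeds_cnm_tp unfolding XY cnm_invariant_def by auto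
    then obtain f where "bij_betw f A B"
      "\<And>x y. x \<in> A \<Longrightarrow> y \<in> A \<Longrightarrow> cnm_tp n m B lt' (f x) (f y) = cnm_tp n m A lt x y"
      by (rule tp_homogeneous_iso[OF ab.a.tp_homogeneous_tp ab.b.tp_homogeneous_tp]) blast
    then show "order_iso X Y"
      unfolding XY order_iso_def cnm_tp_eq_iff by auto
  qed
qed

section \<open>Counting the invariants\<close>

context cnm_order
begin

lemma class_size_pos: "x \<in> A \<Longrightarrow> 1 \<le> class_size A lt x"
  using class_pos_less_size by fastforce

lemma class_sizes_subset: "class_sizes A lt \<subseteq> {1..n+m+1}"
  unfolding class_sizes_def using class_size_pos class_size_le by auto

lemma class_size_order_subset: "class_size_order A lt \<subseteq> class_sizes A lt \<times> class_sizes A lt"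
  unfolding class_size_order_def class_sizes_def by auto

lemma class_size_order_trans:
  assumes "(N1, N2) \<in> class_size_order A lt" "(N2, N3) \<in> class_size_order A lt"
  shows "(N1, N3) \<in> class_size_order A lt"
proof -
  obtain x1 y1 where 1: "x1 \<in> A" "y1 \<in> A" "lt x1 y1" "\<not> sim1 A lt x1 y1" "N1 = class_size A lt x1" "N2 = class_size A lt y1"
    using assms(1) unfolding class_size_order_def by blast
  obtain x2 y2 where 2: "x2 \<in> A" "y2 \<in> A" "lt x2 y2" "\<not> sim1 A lt x2 y2" "N2 = class_size A lt x2" "N3 = class_size A lt y2"
    using assms(2) unfolding class_size_order_def by blast
  have "class_pos A lt x2 < class_size A lt y1" using class_pos_less_size[OF 2(1)] 1(6) 2(5) by simp
  then obtain y1' where y1': "y1' \<in> sim1_class A lt y1" "class_pos A lt y1' = class_pos A lt x2" using class_pos_surj[OF 1(2)] by blast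
  have y1'A: "y1' \<in> A" using sim1_classD[OF y1'(1)] .
  have szy1': "class_size A lt y1' = class_size A lt x2" using class_size_eq[OF 1(2) y1'(1)] 1(6) 2(5) by simp
  have "tp x2 x2 = tp y1' y1'" using tp_diag[OF 2(1)] tp_diag[OF y1'A] szy1' y1'(2) by simp
  then obtain g where g: "order_iso_map A lt A lt g" "g x2 = y1'" using automorphism_moving[OF 2(1) y1'A] by blast
  define z where "z = g y2"
  have zA: "z \<in> A" unfolding z_def using order_iso_map_in[OF g(1) 2(2)] .
  have y1z: "lt y1' z" unfolding z_def using order_iso_map_lt[OF g(1) 2(1) 2(2)] 2(3) g(2) by simp
  have ny1z: "\<not> sim1 A lt y1' z" unfolding z_def using order_iso_map_sim1[OF g(1) 2(1) 2(2)] 2(4) g(2) by simp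
  have szz: "class_size A lt z = N3" unfolding z_def using order_iso_map_class_size[OF g(1) 2(2)] 2(6) by simp
  have o: "lt x1 y1'" "\<not> sim1 A lt x1 y1'"
    using not_sim1_classes_lt[OF 1(1-4) sim1_class_self[OF 1(1)] y1'(1)] by auto
  have x1z: "lt x1 z" using lin_on_trans[OF lin 1(1) y1'A zA o(1) y1z] .
  have nx1z: "\<not> sim1 A lt x1 z"
  proof
    assume "sim1 A lt x1 z"
    then have "sim1 A lt x1 y1'" using sim1_between(1)[OF lin 1(1) y1'A zA o(1) y1z] by blast
    then show False using o(2) by simp
  qed
  show ?thesis unfolding class_size_order_def using 1(1) zA x1z nx1z 1(5) szz by blast
qed

lemma class_size_order_total:
  assumes "N1 \<in> class_sizes A lt" "N2 \<in> class_sizes A lt" "N1 \<noteq> N2"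
  shows "(N1, N2) \<in> class_size_order A lt \<or> (N2, N1) \<in> class_size_order A lt"
proof -
  obtain x y where xy: "x \<in> A" "y \<in> A" "N1 = class_size A lt x" "N2 = class_size A lt y" using assms unfolding class_sizes_def by blast
  have ns: "\<not> sim1 A lt x y"
  proof
    assume "sim1 A lt x y"
    then have "y \<in> sim1_class A lt x" using xy unfolding sim1_class_def by blast
    then show False using class_size_eq[OF xy(1)] xy assms(3) by simp
  qed
  have "x \<noteq> y" using xy assms(3) by auto
  then have "lt x y \<or> lt y x" using lin_on_total[OF lin xy(1,2)] by blast
  then show ?thesis unfolding class_size_order_def using xy ns sim1_sym by blast
qed

lemma large_class_sizes_eq:
  assumes "N1 \<in> class_sizes A lt" "N2 \<in> class_sizes A lt" "min n m < N1" "min n m < N2"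
  shows "N1 = N2"
proof -
  obtain x1 where x1: "x1 \<in> A" "N1 = class_size A lt x1" using assms unfolding class_sizes_def by blast
  obtain x2 where x2: "x2 \<in> A" "N2 = class_size A lt x2" using assms unfolding class_sizes_def by blast
  have b1: "N1 \<le> n + m + 1" "N2 \<le> n + m + 1" using class_size_le x1 x2 by auto
  consider "n = 0 \<and> m = 0" | "m \<le> n \<and> 1 \<le> n" | "n < m" by linarith
  then show ?thesis
  proof cases
    case 1 then show ?thesis using b1 assms(3,4) by simp
  next
    case 2
    obtain u1 where u1: "u1 \<in> sim1_class A lt x1" "class_pos A lt u1 = N1 - 1" using class_pos_surj[OF x1(1), of "N1 - 1"] x1 class_size_pos[OF x1(1)] by auto
    obtain u2 where u2: "u2 \<in> sim1_class A lt x2" "class_pos A lt u2 = N2 - 1" using class_pos_surj[OF x2(1), of "N2 - 1"] x2 class_size_pos[OF x2(1)] by auto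
    have uA: "u1 \<in> A" "u2 \<in> A" using u1 u2 sim1_classD by auto
    have su: "class_size A lt u1 = N1" "class_size A lt u2 = N2" using class_size_eq x1 x2 u1 u2 by auto
    have "tp u1 u1 = tp u2 u2"
      using tp_diag[OF uA(1)] tp_diag[OF uA(2)] su u1(2) u2(2) 2 assms(3,4) by (auto simp: fun_eq_iff)
    then show ?thesis using class_eq_if_tp_eq(1)[OF uA] su by simp
  next
    case 3
    obtain u1 where u1: "u1 \<in> sim1_class A lt x1" "class_pos A lt u1 = 0" using class_pos_surj[OF x1(1), of 0] x1 class_size_pos[OF x1(1)] by auto
    obtain u2 where u2: "u2 \<in> sim1_class A lt x2" "class_pos A lt u2 = 0" using class_pos_surj[OF x2(1), of 0] x2 class_size_pos[OF x2(1)] by auto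
    have uA: "u1 \<in> A" "u2 \<in> A" using u1 u2 sim1_classD by auto
    have su: "class_size A lt u1 = N1" "class_size A lt u2 = N2" using class_size_eq x1 x2 u1 u2 by auto
    have "tp u1 u1 = tp u2 u2"
      using tp_diag[OF uA(1)] tp_diag[OF uA(2)] su u1(2) u2(2) 3 assms(3,4) by (auto simp: fun_eq_iff)
    then show ?thesis using class_eq_if_tp_eq(1)[OF uA] su by simp
  qed
qed

lemma card_class_sizes_le: "card (class_sizes A lt) \<le> min n m + 1"
proof -
  let ?S = "class_sizes A lt"
  have fin: "finite ?S" using class_sizes_subset finite_subset by blast
  have "?S \<subseteq> {1..min n m} \<union> {N \<in> ?S. min n m < N}"
  proof
    fix N assume N: "N \<in> ?S"
    then have "1 \<le> N" using class_sizes_subset by auto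
    then show "N \<in> {1..min n m} \<union> {N \<in> ?S. min n m < N}" using N by (cases "N \<le> min n m") auto
  qed
  moreover have "card {N \<in> ?S. min n m < N} \<le> 1"
  proof -
    have f2: "finite {N \<in> ?S. min n m < N}" using fin by simp
    have "\<forall>a1\<in>{N \<in> ?S. min n m < N}. \<forall>a2\<in>{N \<in> ?S. min n m < N}. a1 = a2"
      using large_class_sizes_eq by blast
    then show ?thesis using card_le_Suc0_iff_eq[OF f2] by simp
  qed
  ultimately have "card ?S \<le> card ({1..min n m} \<union> {N \<in> ?S. min n m < N})"
    by (intro card_mono) (use fin in auto)
  also have "\<dots> \<le> card {1..min n m} + card {N \<in> ?S. min n m < N}" by (rule card_Un_le)
  finally show ?thesis using \<open>card {N \<in> ?S. min n m < N} \<le> 1\<close> by simp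
qed

end

text \<open>A transitive relation on a finite set T that is total on distinct elements is determined by
  the rank of each element (the number of elements strictly below it) together with its
  restriction to the diagonal.\<close>

definition rank_relation :: "nat set \<Rightarrow> (nat \<Rightarrow> nat) \<Rightarrow> (nat \<Rightarrow> bool) \<Rightarrow> (nat \<times> nat) set" where
  "rank_relation T r f = {(d, c). d \<in> T \<and> c \<in> T \<and> (r d < r c \<or> (r d = r c \<and> (d = c \<longrightarrow> f c)))}"

definition strictly_below :: "(nat \<times> nat) set \<Rightarrow> nat set \<Rightarrow> nat \<Rightarrow> nat set" where
  "strictly_below R T c = {d \<in> T. (d, c) \<in> R \<and> (c, d) \<notin> R}"

lemma rank_relation_restrict: "rank_relation T (restrict r T) (restrict f T) = rank_relation T r f"
  unfolding rank_relation_def by auto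

lemma strictly_below_subset_Diff: "strictly_below R T c \<subseteq> T - {c}"
  unfolding strictly_below_def by auto

lemma card_strictly_below_less:
  assumes "finite T" "c \<in> T"
  shows "card (strictly_below R T c) < card T"
proof (rule psubset_card_mono[OF assms(1)])
  show "strictly_below R T c \<subset> T"
    using strictly_below_subset_Diff[of R T c] assms(2) by blast
qed

lemma strictly_below_strict_mono:
  assumes "finite T" "R \<subseteq> T \<times> T" "trans R" "(d, c) \<in> R" "(c, d) \<notin> R"
  shows "card (strictly_below R T d) < card (strictly_below R T c)"
proof (rule psubset_card_mono)
  show "finite (strictly_below R T c)" using assms(1) unfolding strictly_below_def by simp
  have "strictly_below R T d \<subseteq> strictly_below R T c"
  proof
    fix e assume "e \<in> strictly_below R T d"
    then have "e \<in> T" "(e, d) \<in> R" "(d, e) \<notin> R" unfolding strictly_below_def by auto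
    with transD[OF assms(3)] assms(4,5) show "e \<in> strictly_below R T c"
      unfolding strictly_below_def by blast
  qed
  moreover have "d \<in> strictly_below R T c - strictly_below R T d"
    using assms(2,4,5) unfolding strictly_below_def by auto
  ultimately show "strictly_below R T d \<subset> strictly_below R T c" by blast
qed

lemma strictly_below_eq:
  assumes "trans R" "(d, c) \<in> R" "(c, d) \<in> R"
  shows "strictly_below R T d = strictly_below R T c"
  using transD[OF assms(1)] assms(2,3) unfolding strictly_below_def by blast

lemma rank_relation_strictly_below:
  assumes "finite T" "R \<subseteq> T \<times> T" "trans R"
    and total: "\<And>c d. c \<in> T \<Longrightarrow> d \<in> T \<Longrightarrow> c \<noteq> d \<Longrightarrow> (c, d) \<in> R \<or> (d, c) \<in> R"
  shows "R = rank_relation T (\<lambda>c. card (strictly_below R T c)) (\<lambda>c. (c, c) \<in> R)"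
  (is "R = rank_relation T ?r _")
proof (intro set_eqI iffI)
  fix p assume "p \<in> R"
  moreover obtain d c where p: "p = (d, c)" by (cases p)
  ultimately have dc: "(d, c) \<in> R" "d \<in> T" "c \<in> T" using assms(2) by auto
  have "?r d < ?r c \<or> ?r d = ?r c"
  proof (cases "(c, d) \<in> R")
    case True
    then show ?thesis using strictly_below_eq[OF assms(3) dc(1)] by simp
  next
    case False
    then show ?thesis using strictly_below_strict_mono[OF assms(1-3) dc(1)] by simp
  qed
  with dc show "p \<in> rank_relation T ?r (\<lambda>c. (c, c) \<in> R)"
    unfolding p rank_relation_def by auto
next
  fix p assume "p \<in> rank_relation T ?r (\<lambda>c. (c, c) \<in> R)"
  moreover obtain d c where p: "p = (d, c)" by (cases p)
  ultimately have dc: "d \<in> T" "c \<in> T" "?r d < ?r c \<or> (?r d = ?r c \<and> (d = c \<longrightarrow> (c, c) \<in> R))"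
    unfolding rank_relation_def by auto
  show "p \<in> R"
  proof (rule ccontr)
    assume "p \<notin> R"
    with dc total[OF dc(2,1)] have "(c, d) \<in> R" "(d, c) \<notin> R" unfolding p by auto
    with strictly_below_strict_mono[OF assms(1-3)] dc(3) show False by fastforce
  qed
qed
definition size_sets :: "nat \<Rightarrow> nat \<Rightarrow> nat set set" where
  "size_sets n m = {T. T \<subseteq> {1..n+m+1} \<and> card T \<le> min n m + 1}"

definition rank_codes :: "nat \<Rightarrow> nat \<Rightarrow> (nat set \<times> (nat \<Rightarrow> nat) \<times> (nat \<Rightarrow> bool)) set" where
  "rank_codes n m = (SIGMA T:size_sets n m. (T \<rightarrow>\<^sub>E {..<min n m + 1}) \<times> (T \<rightarrow>\<^sub>E UNIV))"

definition cnm_invariant_space :: "nat \<Rightarrow> nat \<Rightarrow> (nat set \<times> (nat \<times> nat) set) set" where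
  "cnm_invariant_space n m = (\<lambda>(T, r, f). (T, rank_relation T r f)) ` rank_codes n m"

lemma cnm_invariant_in_space:
  assumes X: "X \<in> CNM_orders n m"
  shows "cnm_invariant X \<in> cnm_invariant_space n m"
proof -
  obtain A lt where XA: "X = (A, lt)" by (cases X)
  interpret cnm_order n m A lt using X XA CNM_orders_iff by auto
  let ?T = "class_sizes A lt" and ?R = "class_size_order A lt"
  define r where "r = restrict (\<lambda>c. card (strictly_below ?R ?T c)) ?T"
  define f where "f = restrict (\<lambda>c. (c, c) \<in> ?R) ?T"
  have T: "finite ?T" "?T \<in> size_sets n m"
    using class_sizes_subset card_class_sizes_le finite_subset unfolding size_sets_def by auto
  have "r \<in> ?T \<rightarrow>\<^sub>E {..<min n m + 1}"
  proof -
    have "card (strictly_below ?R ?T c) < min n m + 1" if "c \<in> ?T" for c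
      using card_strictly_below_less[OF T(1) that, where R = ?R] card_class_sizes_le by linarith
    then show ?thesis unfolding r_def by auto
  qed
  moreover have "cnm_invariant X = (?T, rank_relation ?T r f)"
    using rank_relation_strictly_below[OF T(1) class_size_order_subset _ class_size_order_total]
      class_size_order_trans
    unfolding cnm_invariant_def XA r_def f_def rank_relation_restrict by (simp add: trans_def)
  ultimately show ?thesis
    using T(2) unfolding cnm_invariant_space_def rank_codes_def f_def by force
qed

lemma finite_size_sets: "finite (size_sets n m)"
  unfolding size_sets_def by (rule finite_subset[of _ "Pow {1..n+m+1}"]) auto

lemma card_size_sets_le: "card (size_sets n m) \<le> 2 ^ (n + m + 1)"
proof -
  have "card (size_sets n m) \<le> card (Pow {1..n+m+1})" unfolding size_sets_def by (rule card_mono) auto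
  then show ?thesis by (simp add: card_Pow)
qed

lemma size_setsD: "T \<in> size_sets n m \<Longrightarrow> finite T \<and> card T \<le> min n m + 1"
  unfolding size_sets_def using finite_subset by auto

lemma finite_rank_codes_fibre:
  "T \<in> size_sets n m \<Longrightarrow> finite ((T \<rightarrow>\<^sub>E {..<min n m + 1}) \<times> (T \<rightarrow>\<^sub>E (UNIV :: bool set)))"
  using size_setsD by (simp add: finite_PiE)

lemma finite_rank_codes: "finite (rank_codes n m)"
  unfolding rank_codes_def using finite_size_sets finite_rank_codes_fibre by (rule finite_SigmaI)

lemma card_rank_codes_le:
  "card (rank_codes n m) \<le> 2 ^ (n + m + 1) * (min n m + 1) ^ (min n m + 1) * 2 ^ (min n m + 1)"
proof -
  let ?J = "min n m + 1"
  have card_T: "card ((T \<rightarrow>\<^sub>E {..<?J}) \<times> (T \<rightarrow>\<^sub>E (UNIV :: bool set))) \<le> ?J ^ ?J * 2 ^ ?J"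
    if "T \<in> size_sets n m" for T
  proof -
    have "finite T" "card T \<le> ?J" using size_setsD[OF that] by auto
    then have "card ((T \<rightarrow>\<^sub>E {..<?J}) \<times> (T \<rightarrow>\<^sub>E (UNIV :: bool set))) = ?J ^ card T * 2 ^ card T"
      by (simp add: card_cartesian_product card_PiE)
    also have "\<dots> \<le> ?J ^ ?J * 2 ^ ?J"
      using \<open>card T \<le> ?J\<close> by (intro mult_mono power_increasing) auto
    finally show ?thesis .
  qed
  have "card (rank_codes n m) = (\<Sum>T\<in>size_sets n m. card ((T \<rightarrow>\<^sub>E {..<?J}) \<times> (T \<rightarrow>\<^sub>E (UNIV :: bool set))))"
    unfolding rank_codes_def using finite_size_sets finite_rank_codes_fibre by (intro card_SigmaI) auto
  also have "\<dots> \<le> card (size_sets n m) * (?J ^ ?J * 2 ^ ?J)"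
    using sum_mono[OF card_T] by simp
  also have "\<dots> \<le> 2 ^ (n + m + 1) * (?J ^ ?J * 2 ^ ?J)" using card_size_sets_le by simp
  finally show ?thesis by (simp add: mult.assoc)
qed

lemma finite_cnm_invariant_space: "finite (cnm_invariant_space n m)"
  unfolding cnm_invariant_space_def using finite_rank_codes by simp

lemma card_cnm_invariant_space_le:
  "card (cnm_invariant_space n m) \<le> 2 ^ (n + m + 1) * (min n m + 1) ^ (min n m + 1) * 2 ^ (min n m + 1)"
  unfolding cnm_invariant_space_def using card_image_le[OF finite_rank_codes] card_rank_codes_le le_trans by blast

lemma cnm_invariant_image_subset: "cnm_invariant ` CNM_orders n m \<subseteq> cnm_invariant_space n m"
  using cnm_invariant_in_space by blast

theorem finite_CNM_classes: "finite (CNM_classes n m)"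
  unfolding CNM_classes_def
proof (rule finite_iso_classes_by_invariant)
  show "finite (cnm_invariant ` CNM_orders n m)"
    using finite_cnm_invariant_space finite_subset[OF cnm_invariant_image_subset] by blast
qed (rule order_iso_iff_cnm_invariant)

theorem I_count_le: "I_count n m \<le> 2 ^ (n + m + 1) * (min n m + 1) ^ (min n m + 1) * 2 ^ (min n m + 1)"
proof -
  have "I_count n m = card (cnm_invariant ` CNM_orders n m)"
    unfolding I_count_def by (rule card_iso_classes_by_invariant) (rule order_iso_iff_cnm_invariant)
  also have "\<dots> \<le> card (cnm_invariant_space n m)"
    using cnm_invariant_image_subset finite_cnm_invariant_space by (intro card_mono)
  finally show ?thesis using card_cnm_invariant_space_le[of n m] by linarith
qed

section \<open>Asymptotics\<close>

lemma fact_mult_Suc_power_le: "fact a * (a + 1) ^ b \<le> (fact (a + b) :: nat)"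
proof (induction b)
  case (Suc b)
  have "fact a * (a + 1) ^ Suc b = (a + 1) * (fact a * (a + 1) ^ b)" by (simp add: algebra_simps)
  also have "\<dots> \<le> (a + b + 1) * fact (a + b)" using Suc.IH by (intro mult_mono) auto
  also have "\<dots> = fact (a + Suc b)" by (simp add: algebra_simps)
  finally show ?case .
qed simp

lemma power_div_fact_tendsto_0: "(\<lambda>j. x ^ j / fact j) \<longlonglongrightarrow> (0::real)"
  using summable_LIMSEQ_zero[OF summable_exp[of x]] by (simp add: divide_inverse mult.commute)

text \<open>With h = (n + m) div 2 + 1 we have min n m + 1 \<le> h and n + m + 1 \<le> 2 h, so the bound of
  I_count_le is at most 8 ^ h * h ^ h, while (h - 1)! * h ^ h \<le> (2 h - 1)! \<le> (n + m + 1)!.\<close>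

lemma I_count_mult_fact_le: "I_count n m * fact ((n + m) div 2) \<le> 8 ^ ((n + m) div 2 + 1) * fact (n + m + 1)"
proof -
  define h where "h = (n + m) div 2 + 1"
  define J where "J = min n m + 1"
  have J: "J \<le> h" "1 \<le> J" and k: "n + m + 1 \<le> 2 * h" unfolding J_def h_def by auto
  have "I_count n m \<le> 2 ^ (n + m + 1) * J ^ J * 2 ^ J" using I_count_le[of n m] unfolding J_def .
  also have "\<dots> \<le> 2 ^ (2 * h) * h ^ h * 2 ^ h"
  proof -
    have "J ^ J \<le> h ^ J" using J by (simp add: power_mono)
    also have "\<dots> \<le> h ^ h" using J by (intro power_increasing) auto
    finally have "J ^ J \<le> h ^ h" .
    moreover have "(2::nat) ^ (n + m + 1) \<le> 2 ^ (2 * h)" "(2::nat) ^ J \<le> 2 ^ h"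
      using J(1) k by (intro power_increasing; simp)+
    ultimately show ?thesis by (intro mult_mono) auto
  qed
  also have "\<dots> = 8 ^ h * h ^ h"
  proof -
    have "(2::nat) ^ (2 * h) * 2 ^ h = 2 ^ (3 * h)" by (simp add: power_add[symmetric])
    also have "\<dots> = 8 ^ h" by (simp add: power_mult)
    finally show ?thesis by (simp add: algebra_simps)
  qed
  finally have "I_count n m * fact (h - 1) \<le> 8 ^ h * (fact (h - 1) * h ^ h)"
    by (simp add: algebra_simps)
  also have "fact (h - 1) * h ^ h \<le> fact (n + m + 1)"
  proof -
    have "fact (h - 1) * h ^ h \<le> (fact (h - 1 + h) :: nat)"
      using fact_mult_Suc_power_le[of "h - 1" h] unfolding h_def by simp
    also have "\<dots> \<le> fact (n + m + 1)" unfolding h_def by (intro fact_mono) auto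
    finally show ?thesis .
  qed
  finally show ?thesis unfolding h_def by simp
qed

theorem I_count_little_o_fact:
  assumes "e > 0"
  shows "\<exists>K. \<forall>n m. K \<le> n + m + 1 \<longrightarrow> real (I_count n m) < e * fact (n + m + 1)"
proof -
  obtain H where H: "\<And>j. H \<le> j \<Longrightarrow> 8 ^ j / fact j < e / 8"
    using order_tendstoD(2)[OF power_div_fact_tendsto_0[of 8], of "e / 8"] assms
    unfolding eventually_sequentially by auto
  have "real (I_count n m) < e * fact (n + m + 1)" if "2 * H \<le> n + m" for n m
  proof -
    define h where "h = (n + m) div 2"
    have "real (I_count n m * fact h) \<le> real (8 ^ (h + 1) * fact (n + m + 1))"
      using I_count_mult_fact_le[of n m] unfolding h_def of_nat_le_iff .
    also have "\<dots> = 8 * 8 ^ h * fact (n + m + 1)" by (simp del: fact_Suc)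
    finally have "real (I_count n m) * fact h \<le> 8 * 8 ^ h * fact (n + m + 1)" by simp
    also have "\<dots> < e * fact h * fact (n + m + 1)"
    proof (rule mult_strict_right_mono)
      have "H \<le> h" using that unfolding h_def by auto
      from H[OF this] show "8 * 8 ^ h < e * fact h" by (simp add: field_simps)
    qed simp
    finally have "fact h * real (I_count n m) < fact h * (e * fact (n + m + 1))"
      by (simp only: mult_ac)
    then show ?thesis by (rule mult_left_less_imp_less) simp
  qed
  then show ?thesis by (metis add_le_imp_le_diff diff_add_inverse2)
qed

lemma I_count_div_L_count_less:
  assumes "real (I_count n m) < e * fact (n + m + 1)"
  shows "real (I_count n m) / real (L_count (n + m + 1)) < e"
proof -
  have L: "fact (n + m + 1) \<le> real (L_count (n + m + 1))"
    using fact_le_L_count by (metis of_nat_fact of_nat_le_iff)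
  moreover have "0 < e"
  proof -
    have "0 < e * fact (n + m + 1)" using assms of_nat_0_le_iff[of "I_count n m"] by linarith
    then show ?thesis using zero_less_mult_pos2 fact_gt_zero by blast
  qed
  ultimately have "e * fact (n + m + 1) \<le> e * real (L_count (n + m + 1))"
    by (intro mult_left_mono) auto
  with assms have "real (I_count n m) < e * real (L_count (n + m + 1))" by linarith
  moreover have "(0::real) < fact (n + m + 1)" by simp
  with L have "0 < real (L_count (n + m + 1))" by linarith
  ultimately show ?thesis by (simp add: divide_less_eq)
qed

theorem mainTheorem10:
  shows "(\<forall>n m. finite (CNM_classes n m)) \<and> (\<forall>k. finite (colored_classes k)) \<and>
    (\<exists>C::real. \<exists>K::nat. \<forall>n m. n + m + 1 \<ge> K \<longrightarrow>
        real (I_count n m) \<le> C * fact (n + m + 1) * (2.123::real) ^ (n + m + 1)) \<and>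
    (\<forall>\<epsilon>>0::real. \<exists>K::nat. \<forall>n m. n + m + 1 \<ge> K \<longrightarrow>
        real (I_count n m) / real (L_count (n + m + 1)) < \<epsilon>)"
proof (intro conjI allI impI)
  fix n m show "finite (CNM_classes n m)" by (rule finite_CNM_classes)
next
  fix k show "finite (colored_classes k)" by (rule finite_colored_classes)
next
  obtain K where K: "\<And>n m. K \<le> n + m + 1 \<Longrightarrow> real (I_count n m) < 1 * fact (n + m + 1)"
    using I_count_little_o_fact[of 1] by auto
  have "real (I_count n m) \<le> 1 * fact (n + m + 1) * 2.123 ^ (n + m + 1)" if "K \<le> n + m + 1" for n m
  proof -
    have "fact (n + m + 1) * 1 \<le> fact (n + m + 1) * (2.123::real) ^ (n + m + 1)"
      by (intro mult_left_mono one_le_power) simp_all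
    with K[OF that] show ?thesis by linarith
  qed
  then show "\<exists>C K. \<forall>n m. K \<le> n + m + 1 \<longrightarrow>
      real (I_count n m) \<le> C * fact (n + m + 1) * (2.123::real) ^ (n + m + 1)" by blast
next
  fix \<epsilon> :: real assume "\<epsilon> > 0"
  then show "\<exists>K. \<forall>n m. K \<le> n + m + 1 \<longrightarrow> real (I_count n m) / real (L_count (n + m + 1)) < \<epsilon>"
    using I_count_little_o_fact I_count_div_L_count_less by blast
qed

end
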